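(* Consider the resource theory of unital maps on $\mathcal H_W\otimes\mathcal H_S$ with $d_W=\dim\mathcal H_W\ge d_S=\dim\mathcal H_S$, and a fixed orthonormal basis $\{\ket i_W\}$ of $\mathcal H_W$ with $\Pi^k_W=\sum_{i=1}^k\ket i\bra i_W$. Let $C^k=\{\sigma_{WS}\in\Omega:\mathrm{Tr}_S\sigma_{WS}=\Pi^k_W/k\}$ for $1\le k\le d_W$ and $\mathcal C=\{C^k\}_{k=1}^{d_W}\cup\{\Omega\}$. Let the target $\mathcal S$ consist of all specifications of the form $V=\{\sigma_{WS}\in\Omega:\mathrm{Tr}_W\sigma_{WS}\in V_S\}$ for some non-empty set $V_S$ of density operators on $\mathcal H_S$. Then $\mathcal C$ is a currency for $\mathcal S$ (with value function $\mathrm{Val}(C^k)=\log d_W-\log k$, $\mathrm{Val}(\Omega)=0$), and $\mathcal C$ is independent of $\mathcal S$.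
   Context: $\Omega$ is the set of all density operators on $\mathcal H_W\otimes\mathcal H_S$; specifications are non-empty subsets of $\Omega$. Allowed transformations: $f_{\mathcal E}(V)=\{\mathcal E(\rho):\rho\in V\}$ for unital CPTP maps $\mathcal E$ on $\mathcal H_W\otimes\mathcal H_S$; $V\to W$ iff some such $\mathcal E$ has $\mathcal E(\rho)\in W$ for all $\rho\in V$. Logarithms base 2. A subset $\mathcal C$ is a currency for target $\mathcal S$ if (Order) any two elements of $\mathcal C$ are comparable under $\to$ and $\Omega\in\mathcal C$; (Universality) $\Omega\in\mathcal S$ and every $V\in\mathcal S$ has $C,C'\in\mathcal C$ with $C\to V$, $V\to C'$. A value function $\mathrm{Val}:\mathcal C\to\mathbb R_{\ge0}$ satisfies $\mathrm{Val}(C')\ge\mathrm{Val}(C)\iff C'\to C$ and $\mathrm{Val}(\Omega)=0$. Independence: $C\cap V\neq\emptyset$ for all $C\in\mathcal C$, $V\in\mathcal S$, and $C\to C'$ implies $C\cap V\to C'\cap V$ for all $V\in\mathcal S$. *)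

theory Defs
  imports Complex_Main "Jordan_Normal_Form.Matrix"
begin

text \<open>Composite system H_W (dimension dW) tensor H_S (dimension dS), modelled by complex
  (dW*dS) x (dW*dS) matrices; the product basis vector |i>_W |s>_S has index i*dS + s.
  The fixed orthonormal basis of H_W is the computational basis.\<close>

definition cadj :: "complex mat \<Rightarrow> complex mat" where
  "cadj A = mat (dim_col A) (dim_row A) (\<lambda>(i,j). cnj (A $$ (j,i)))"

definition mtrace :: "complex mat \<Rightarrow> complex" where
  "mtrace A = (\<Sum>i<dim_row A. A $$ (i,i))"

definition density :: "nat \<Rightarrow> complex mat \<Rightarrow> bool" where
  "density n \<rho> \<longleftrightarrow> \<rho> \<in> carrier_mat n n \<and> cadj \<rho> = \<rho> \<and>
     (\<forall>v :: nat \<Rightarrow> complex.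
        (\<Sum>i<n. \<Sum>j<n. cnj (v i) * \<rho> $$ (i,j) * v j) \<in> \<real> \<and>
        Re (\<Sum>i<n. \<Sum>j<n. cnj (v i) * \<rho> $$ (i,j) * v j) \<ge> 0) \<and>
     mtrace \<rho> = 1"

definition Omega :: "nat \<Rightarrow> nat \<Rightarrow> complex mat set" where
  "Omega dW dS = {\<rho>. density (dW * dS) \<rho>}"

definition is_spec :: "nat \<Rightarrow> nat \<Rightarrow> complex mat set \<Rightarrow> bool" where
  "is_spec dW dS V \<longleftrightarrow> V \<noteq> {} \<and> V \<subseteq> Omega dW dS"

definition ptrace_S :: "nat \<Rightarrow> nat \<Rightarrow> complex mat \<Rightarrow> complex mat" where
  "ptrace_S dW dS \<sigma> = mat dW dW (\<lambda>(i,j). \<Sum>s<dS. \<sigma> $$ (i*dS + s, j*dS + s))"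

definition ptrace_W :: "nat \<Rightarrow> nat \<Rightarrow> complex mat \<Rightarrow> complex mat" where
  "ptrace_W dW dS \<sigma> = mat dS dS (\<lambda>(s,t). \<Sum>i<dW. \<sigma> $$ (i*dS + s, i*dS + t))"

text \<open>Unital CPTP maps on C^n, given by a (finite) Kraus representation
  E(rho) = sum_k K_k rho K_k^dagger with sum K_k^dagger K_k = 1 (trace preserving)
  and sum K_k K_k^dagger = 1 (unital).\<close>
definition kraus_apply :: "complex mat list \<Rightarrow> complex mat \<Rightarrow> complex mat" where
  "kraus_apply Ks \<rho> = foldr (\<lambda>K acc. K * \<rho> * cadj K + acc) Ks (0\<^sub>m (dim_row \<rho>) (dim_col \<rho>))"

definition unital_cptp :: "nat \<Rightarrow> (complex mat \<Rightarrow> complex mat) \<Rightarrow> bool" where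
  "unital_cptp n E \<longleftrightarrow> (\<exists>Ks. Ks \<noteq> [] \<and> (\<forall>K\<in>set Ks. K \<in> carrier_mat n n) \<and>
      foldr (\<lambda>K acc. cadj K * K + acc) Ks (0\<^sub>m n n) = 1\<^sub>m n \<and>
      foldr (\<lambda>K acc. K * cadj K + acc) Ks (0\<^sub>m n n) = 1\<^sub>m n \<and>
      (\<forall>\<rho> \<in> carrier_mat n n. E \<rho> = kraus_apply Ks \<rho>))"

definition reach :: "nat \<Rightarrow> nat \<Rightarrow> complex mat set \<Rightarrow> complex mat set \<Rightarrow> bool" where
  "reach dW dS V W \<longleftrightarrow> (\<exists>E. unital_cptp (dW * dS) E \<and> (\<forall>\<rho>\<in>V. E \<rho> \<in> W))"

definition is_currency :: "nat \<Rightarrow> nat \<Rightarrow> complex mat set set \<Rightarrow> complex mat set set \<Rightarrow> bool" where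
  "is_currency dW dS \<C> \<S> \<longleftrightarrow>
     (\<forall>X\<in>\<C>. is_spec dW dS X) \<and> (\<forall>V\<in>\<S>. is_spec dW dS V) \<and>
     (\<forall>X\<in>\<C>. \<forall>Y\<in>\<C>. reach dW dS X Y \<or> reach dW dS Y X) \<and> Omega dW dS \<in> \<C> \<and>
     Omega dW dS \<in> \<S> \<and>
     (\<forall>V\<in>\<S>. \<exists>X\<in>\<C>. \<exists>Y\<in>\<C>. reach dW dS X V \<and> reach dW dS V Y)"

definition is_value_function ::
  "nat \<Rightarrow> nat \<Rightarrow> complex mat set set \<Rightarrow> (complex mat set \<Rightarrow> real) \<Rightarrow> bool" where
  "is_value_function dW dS \<C> Val \<longleftrightarrow>
     (\<forall>X\<in>\<C>. Val X \<ge> 0) \<and>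
     (\<forall>X\<in>\<C>. \<forall>Y\<in>\<C>. Val Y \<ge> Val X \<longleftrightarrow> reach dW dS Y X) \<and>
     Val (Omega dW dS) = 0"

definition is_independent :: "nat \<Rightarrow> nat \<Rightarrow> complex mat set set \<Rightarrow> complex mat set set \<Rightarrow> bool" where
  "is_independent dW dS \<C> \<S> \<longleftrightarrow>
     (\<forall>X\<in>\<C>. \<forall>V\<in>\<S>. X \<inter> V \<noteq> {}) \<and>
     (\<forall>X\<in>\<C>. \<forall>Y\<in>\<C>. reach dW dS X Y \<longrightarrow> (\<forall>V\<in>\<S>. reach dW dS (X \<inter> V) (Y \<inter> V)))"

definition proj_norm :: "nat \<Rightarrow> nat \<Rightarrow> complex mat" where
  "proj_norm dW k = mat dW dW (\<lambda>(i,j). if i = j \<and> i < k then 1 / of_nat k else 0)"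

definition currency_set :: "nat \<Rightarrow> nat \<Rightarrow> nat \<Rightarrow> complex mat set" where
  "currency_set dW dS k = {\<sigma> \<in> Omega dW dS. ptrace_S dW dS \<sigma> = proj_norm dW k}"

definition currency_family :: "nat \<Rightarrow> nat \<Rightarrow> complex mat set set" where
  "currency_family dW dS = (currency_set dW dS ` {1..dW}) \<union> {Omega dW dS}"

definition target_family :: "nat \<Rightarrow> nat \<Rightarrow> complex mat set set" where
  "target_family dW dS = {{\<sigma> \<in> Omega dW dS. ptrace_W dW dS \<sigma> \<in> VS} | VS.
       VS \<noteq> {} \<and> (\<forall>\<tau>\<in>VS. density dS \<tau>)}"

end

theory Submission
  imports Defs
begin

text \<open>
  A unital channel cannot push a diagonal entry of its output above the largest eigenvalue of a
  diagonal input. The state \<Pi>^k/k \<otimes> 1/dS of C^k has all eigenvalues at most 1/(k dS), while a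
  state of C^k' carries weight 1 on only k' dS diagonal entries; hence C^k \<rightarrow> C^k' forces k \<le> k',
  and \<Omega> \<rightarrow> C^k' forces k' = dW. Conversely, dephasing W and mixing its first k' levels uniformly
  is a unital channel that sends every state whose W-marginal lives on those levels into C^k' and
  leaves the S-marginal unchanged; it realises C^k \<rightarrow> C^k' for k \<le> k' and \<Omega> \<rightarrow> C^dW, and, since
  the targets are determined by S-marginals, also independence. The currency is thus totally
  ordered by the smallest reachable level k, and log dW - log k is a value function.

  For universality, measure a state of C^1 in the product basis and prepare
  (1/dW) 1_W \<otimes> \<tau> on the first W-level and (1/dW) 1_W \<otimes> ((dW/dS) 1 - \<tau>)/(dW - 1) on the
  others. The prepared states sum to the identity, so the channel is unital, and the second one
  is positive because \<tau> \<le> 1 \<le> (dW/dS) 1: this is where dS \<le> dW enters.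
\<close>

lemma sum_lessThan_mult: "(\<Sum>x<m*n. f x) = (\<Sum>i<m. \<Sum>s<n. f (i*n + s :: nat))"
proof -
  have shift: "sum f {a..<a + n} = (\<Sum>s<n. f (a + s))" for a
    by (induction n) (auto simp: algebra_simps)
  have "(\<Sum>x<m*n. f x) = (\<Sum>i<m. sum f {i*n..<i*n + n})"
    by (simp add: sum.nat_group)
  also have "\<dots> = (\<Sum>i<m. \<Sum>s<n. f (i*n + s))"
    by (simp only: shift)
  finally show ?thesis .
qed

lemma mult_index_less: "i < m \<Longrightarrow> s < n \<Longrightarrow> i*n + s < m*(n::nat)"
proof -
  assume a: "i < m" "s < n"
  have "i*n + s < (i+1)*n" using a by simp
  also have "\<dots> \<le> m*n" using a by (intro mult_le_mono1) simp
  finally show ?thesis .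
qed

lemma sum_delta_pair:
  assumes "finite A" "finite B" "a \<in> A" "b \<in> B"
  shows "(\<Sum>x\<in>A. \<Sum>y\<in>B. if x = a \<and> y = b then F x y else 0) = F a b"
proof -
  have "(\<Sum>y\<in>B. if x = a \<and> y = b then F x y else 0) = (if x = a then F x b else 0)" for x
    using assms by (cases "x = a") simp_all
  then show ?thesis using assms by simp
qed

lemma sum_lessThan_if_less: "k \<le> (m::nat) \<Longrightarrow> (\<Sum>i<m. if i < k then f i else 0) = (\<Sum>i<k. f i)"
proof -
  assume "k \<le> m"
  then have "{..<m} \<inter> {i. i < k} = {..<k}" by auto
  then show ?thesis
    using sum.inter_restrict[of "{..<m}" f "{i. i < k}"] by simp
qed

lemma sum_if_const_cond: "(\<Sum>x\<in>A. if P then f x else 0) = (if P then sum f A else 0)"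
  by (cases P) simp_all

lemma if_zero_mult_if_zero:
  "(if P then a else 0) * (if Q then b else 0) = (if P \<and> Q then a * b else (0::'a::mult_zero))"
  by simp

lemma all_lessThan_mult:
  assumes "0 < (n::nat)"
  shows "(\<forall>x<m*n. P x) \<longleftrightarrow> (\<forall>i<m. \<forall>s<n. P (i*n + s))"
proof
  assume "\<forall>i<m. \<forall>s<n. P (i*n + s)"
  moreover have "x = (x div n)*n + x mod n" "x div n < m" "x mod n < n" if "x < m*n" for x
    using that assms by (auto simp: less_mult_imp_div_less)
  ultimately show "\<forall>x<m*n. P x" by metis
qed (auto simp: mult_index_less)

lemma block_index_eq_iff [simp]:
  assumes "s < n" "t < n"
  shows "i*n + s = j*n + t \<longleftrightarrow> i = j \<and> s = (t::nat)"
proof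
  assume "i*n + s = j*n + t"
  then have "(i*n + s) div n = (j*n + t) div n" "(i*n + s) mod n = (j*n + t) mod n" by simp_all
  then show "i = j \<and> s = t" using assms by simp
qed simp

lemma div_mod_eq_iff_eq: "(x div n = y div n \<and> x mod n = y mod (n::nat)) \<longleftrightarrow> x = y"
  by (metis div_mult_mod_eq)

lemma cadj_carrier [simp]: "K \<in> carrier_mat n m \<Longrightarrow> cadj K \<in> carrier_mat m n"
  by (auto simp: cadj_def)

lemma cadj_index [simp]: "i < dim_col K \<Longrightarrow> j < dim_row K \<Longrightarrow> cadj K $$ (i,j) = cnj (K $$ (j,i))"
  by (auto simp: cadj_def)

lemma cadj_dim [simp]: "dim_row (cadj K) = dim_col K" "dim_col (cadj K) = dim_row K"
  by (auto simp: cadj_def)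

lemma sandwich_index:
  assumes "K \<in> carrier_mat n n" "\<rho> \<in> carrier_mat n n" "x < n" "y < n"
  shows "(K * \<rho> * cadj K) $$ (x,y) = (\<Sum>c<n. \<Sum>d<n. K $$ (x,c) * \<rho> $$ (c,d) * cnj (K $$ (y,d)))"
proof -
  have "(K * \<rho> * cadj K) $$ (x,y) = (\<Sum>d<n. (\<Sum>c<n. K $$ (x,c) * \<rho> $$ (c,d)) * cnj (K $$ (y,d)))"
    using assms by (simp add: scalar_prod_def atLeast0LessThan)
  also have "\<dots> = (\<Sum>c<n. \<Sum>d<n. K $$ (x,c) * \<rho> $$ (c,d) * cnj (K $$ (y,d)))"
    by (simp add: sum_distrib_right) (rule sum.swap)
  finally show ?thesis .
qed

lemma cadj_mult_index:
  "K \<in> carrier_mat n n \<Longrightarrow> x < n \<Longrightarrow> y < n \<Longrightarrow>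
   (cadj K * K) $$ (x,y) = (\<Sum>a<n. cnj (K $$ (a,x)) * K $$ (a,y))"
  by (simp add: scalar_prod_def atLeast0LessThan)

lemma mult_cadj_index:
  "K \<in> carrier_mat n n \<Longrightarrow> x < n \<Longrightarrow> y < n \<Longrightarrow>
   (K * cadj K) $$ (x,y) = (\<Sum>a<n. K $$ (x,a) * cnj (K $$ (y,a)))"
  by (simp add: scalar_prod_def atLeast0LessThan)

lemma foldr_add_index:
  assumes "\<forall>K\<in>set Ks. F K \<in> carrier_mat n n"
  shows "foldr (\<lambda>K acc. F K + acc) Ks (0\<^sub>m n n) \<in> carrier_mat n n"
    "x < n \<Longrightarrow> y < n \<Longrightarrow>
     foldr (\<lambda>K acc. F K + acc) Ks (0\<^sub>m n n) $$ (x,y) = (\<Sum>l<length Ks. F (Ks!l) $$ (x,y))"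
proof -
  have "foldr (\<lambda>K acc. F K + acc) Ks (0\<^sub>m n n) \<in> carrier_mat n n \<and>
    (\<forall>x<n. \<forall>y<n. foldr (\<lambda>K acc. F K + acc) Ks (0\<^sub>m n n) $$ (x,y) = (\<Sum>l<length Ks. F (Ks!l) $$ (x,y)))"
    using assms
    by (induction Ks) (auto simp del: sum.lessThan_Suc simp: sum.lessThan_Suc_shift)
  then show "foldr (\<lambda>K acc. F K + acc) Ks (0\<^sub>m n n) \<in> carrier_mat n n"
    "x < n \<Longrightarrow> y < n \<Longrightarrow>
     foldr (\<lambda>K acc. F K + acc) Ks (0\<^sub>m n n) $$ (x,y) = (\<Sum>l<length Ks. F (Ks!l) $$ (x,y))"
    by auto
qed

definition qform :: "nat \<Rightarrow> (nat \<Rightarrow> nat \<Rightarrow> complex) \<Rightarrow> (nat \<Rightarrow> complex) \<Rightarrow> complex" where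
  "qform n A v = (\<Sum>i<n. \<Sum>j<n. cnj (v i) * A i j * v j)"

definition psd :: "nat \<Rightarrow> (nat \<Rightarrow> nat \<Rightarrow> complex) \<Rightarrow> bool" where
  "psd n A \<longleftrightarrow> (\<forall>i<n. \<forall>j<n. cnj (A j i) = A i j) \<and> (\<forall>v. 0 \<le> Re (qform n A v))"

lemma qform_cong: "(\<And>i j. i < n \<Longrightarrow> j < n \<Longrightarrow> A i j = B i j) \<Longrightarrow> qform n A v = qform n B v"
  unfolding qform_def by (intro sum.cong refl) auto

lemma qform_sum: "qform n (\<lambda>i j. \<Sum>k\<in>K. A k i j) v = (\<Sum>k\<in>K. qform n (A k) v)"
proof -
  have "qform n (\<lambda>i j. \<Sum>k\<in>K. A k i j) v = (\<Sum>i<n. \<Sum>j<n. \<Sum>k\<in>K. cnj (v i) * A k i j * v j)"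
    unfolding qform_def by (simp add: sum_distrib_left sum_distrib_right)
  also have "\<dots> = (\<Sum>k\<in>K. \<Sum>i<n. \<Sum>j<n. cnj (v i) * A k i j * v j)"
    by (subst sum.swap, subst (2) sum.swap) simp
  finally show ?thesis unfolding qform_def .
qed

lemma qform_linear:
  "qform n (\<lambda>i j. a * A i j + b * B i j) v = a * qform n A v + b * qform n B v"
  unfolding qform_def by (simp add: algebra_simps sum.distrib sum_distrib_left)

lemma qform_identity: "qform n (\<lambda>i j. if i = j then 1 else 0) v = (\<Sum>i<n. cnj (v i) * v i)"
proof -
  have "qform n (\<lambda>i j. if i = j then 1 else 0) v = (\<Sum>i<n. \<Sum>j<n. if j = i then cnj (v i) * v i else 0)"
    unfolding qform_def by (intro sum.cong refl) auto
  then show ?thesis by simp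
qed

lemma qform_sandwich:
  "qform n (\<lambda>x y. \<Sum>c<n. \<Sum>d<n. K x c * r c d * cnj (K y d)) v
   = qform n r (\<lambda>c. \<Sum>y<n. cnj (K y c) * v y)"
proof -
  have "qform n (\<lambda>x y. \<Sum>c<n. \<Sum>d<n. K x c * r c d * cnj (K y d)) v
     = (\<Sum>x<n. \<Sum>y<n. \<Sum>c<n. \<Sum>d<n. cnj (v x) * K x c * r c d * cnj (K y d) * v y)"
    unfolding qform_def by (simp add: sum_distrib_left sum_distrib_right mult.assoc)
  also have "\<dots> = (\<Sum>c<n. \<Sum>d<n. \<Sum>x<n. \<Sum>y<n. cnj (v x) * K x c * r c d * cnj (K y d) * v y)"
    by (subst sum.swap, subst (2) sum.swap, subst (3) sum.swap, subst (2) sum.swap) simp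
  also have "\<dots> = qform n r (\<lambda>c. \<Sum>y<n. cnj (K y c) * v y)"
    unfolding qform_def by (simp add: sum_distrib_left sum_distrib_right mult_ac)
  finally show ?thesis .
qed

lemma qform_real:
  assumes "\<forall>i<n. \<forall>j<n. cnj (A j i) = A i j"
  shows "qform n A v \<in> \<real>"
proof -
  have "cnj (qform n A v) = (\<Sum>i<n. \<Sum>j<n. v i * A j i * cnj (v j))"
    unfolding qform_def using assms by (simp add: cnj_sum)
  also have "\<dots> = qform n A v"
    unfolding qform_def by (subst sum.swap) (simp add: mult_ac)
  finally show ?thesis using Reals_cnj_iff by blast
qed

lemma cadj_eq_iff:
  assumes "\<rho> \<in> carrier_mat n n"
  shows "cadj \<rho> = \<rho> \<longleftrightarrow> (\<forall>i<n. \<forall>j<n. cnj (\<rho> $$ (j,i)) = \<rho> $$ (i,j))"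
proof
  assume "cadj \<rho> = \<rho>"
  then show "\<forall>i<n. \<forall>j<n. cnj (\<rho> $$ (j,i)) = \<rho> $$ (i,j)"
    using assms by (metis cadj_index carrier_matD)
next
  assume "\<forall>i<n. \<forall>j<n. cnj (\<rho> $$ (j,i)) = \<rho> $$ (i,j)"
  then show "cadj \<rho> = \<rho>" using assms by (intro eq_matI) auto
qed

lemma density_iff_psd:
  "density n \<rho> \<longleftrightarrow> \<rho> \<in> carrier_mat n n \<and> psd n (\<lambda>i j. \<rho> $$ (i,j)) \<and> (\<Sum>i<n. \<rho> $$ (i,i)) = 1"
proof (cases "\<rho> \<in> carrier_mat n n")
  case True
  have "qform n (\<lambda>i j. \<rho> $$ (i,j)) v \<in> \<real>" if "\<forall>i<n. \<forall>j<n. cnj (\<rho> $$ (j,i)) = \<rho> $$ (i,j)" for v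
    using that by (rule qform_real)
  then show ?thesis
    unfolding density_def psd_def qform_def mtrace_def cadj_eq_iff[OF True] using True by auto
qed (auto simp: density_def)

lemma density_carrier: "density n \<rho> \<Longrightarrow> \<rho> \<in> carrier_mat n n"
  by (simp add: density_def)

lemma density_trace: "density n \<rho> \<Longrightarrow> (\<Sum>i<n. \<rho> $$ (i,i)) = 1"
  by (simp add: density_iff_psd)

lemma density_psd: "density n \<rho> \<Longrightarrow> psd n (\<lambda>i j. \<rho> $$ (i,j))"
  by (simp add: density_iff_psd)

section \<open>Kraus channels\<close>

definition kraus_tp :: "nat \<Rightarrow> complex mat list \<Rightarrow> bool" where
  "kraus_tp n Ks \<longleftrightarrow> (\<forall>c<n. \<forall>d<n.
     (\<Sum>l<length Ks. \<Sum>a<n. cnj (Ks!l $$ (a,d)) * Ks!l $$ (a,c)) = (if d = c then 1 else 0))"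

definition kraus_unital :: "nat \<Rightarrow> complex mat list \<Rightarrow> bool" where
  "kraus_unital n Ks \<longleftrightarrow> (\<forall>x<n. \<forall>y<n.
     (\<Sum>l<length Ks. \<Sum>a<n. Ks!l $$ (x,a) * cnj (Ks!l $$ (y,a))) = (if x = y then 1 else 0))"

context
  fixes n :: nat and Ks :: "complex mat list"
  assumes Ks_carrier: "\<forall>K\<in>set Ks. K \<in> carrier_mat n n"
begin

lemma kraus_apply_carrier: "\<rho> \<in> carrier_mat n n \<Longrightarrow> kraus_apply Ks \<rho> \<in> carrier_mat n n"
proof -
  assume "\<rho> \<in> carrier_mat n n"
  then have "\<forall>K\<in>set Ks. K * \<rho> * cadj K \<in> carrier_mat n n"
    using Ks_carrier by (metis cadj_carrier mult_carrier_mat)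
  then show ?thesis
    unfolding kraus_apply_def using \<open>\<rho> \<in> carrier_mat n n\<close> by (simp add: foldr_add_index(1))
qed

lemma kraus_apply_index:
  assumes "\<rho> \<in> carrier_mat n n" "x < n" "y < n"
  shows "kraus_apply Ks \<rho> $$ (x,y) =
    (\<Sum>l<length Ks. \<Sum>c<n. \<Sum>d<n. Ks!l $$ (x,c) * \<rho> $$ (c,d) * cnj (Ks!l $$ (y,d)))"
proof -
  have "\<forall>K\<in>set Ks. K * \<rho> * cadj K \<in> carrier_mat n n"
    using Ks_carrier assms(1) by (metis cadj_carrier mult_carrier_mat)
  then have "kraus_apply Ks \<rho> $$ (x,y) = (\<Sum>l<length Ks. (Ks!l * \<rho> * cadj (Ks!l)) $$ (x,y))"
    unfolding kraus_apply_def using assms by (simp add: foldr_add_index(2))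
  also have "\<dots> = (\<Sum>l<length Ks. \<Sum>c<n. \<Sum>d<n. Ks!l $$ (x,c) * \<rho> $$ (c,d) * cnj (Ks!l $$ (y,d)))"
    using Ks_carrier assms by (intro sum.cong refl sandwich_index) auto
  finally show ?thesis .
qed

lemma foldr_kraus_tp_iff:
  "foldr (\<lambda>K acc. cadj K * K + acc) Ks (0\<^sub>m n n) = 1\<^sub>m n \<longleftrightarrow> kraus_tp n Ks"
proof -
  have F: "\<forall>K\<in>set Ks. cadj K * K \<in> carrier_mat n n"
    using Ks_carrier by (metis cadj_carrier mult_carrier_mat)
  have "foldr (\<lambda>K acc. cadj K * K + acc) Ks (0\<^sub>m n n) $$ (d,c) =
      (\<Sum>l<length Ks. \<Sum>a<n. cnj (Ks!l $$ (a,d)) * Ks!l $$ (a,c))" if "c < n" "d < n" for c d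
    using that Ks_carrier by (auto simp: foldr_add_index(2)[OF F] intro!: sum.cong cadj_mult_index)
  then show ?thesis
    unfolding kraus_tp_def using foldr_add_index(1)[OF F]
    by (auto simp: eq_matI mat_eq_iff)
qed

lemma foldr_kraus_unital_iff:
  "foldr (\<lambda>K acc. K * cadj K + acc) Ks (0\<^sub>m n n) = 1\<^sub>m n \<longleftrightarrow> kraus_unital n Ks"
proof -
  have F: "\<forall>K\<in>set Ks. K * cadj K \<in> carrier_mat n n"
    using Ks_carrier by (metis cadj_carrier mult_carrier_mat)
  have "foldr (\<lambda>K acc. K * cadj K + acc) Ks (0\<^sub>m n n) $$ (x,y) =
      (\<Sum>l<length Ks. \<Sum>a<n. Ks!l $$ (x,a) * cnj (Ks!l $$ (y,a)))" if "x < n" "y < n" for x y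
    using that Ks_carrier by (auto simp: foldr_add_index(2)[OF F] intro!: sum.cong mult_cadj_index)
  then show ?thesis
    unfolding kraus_unital_def using foldr_add_index(1)[OF F]
    by (auto simp: eq_matI mat_eq_iff)
qed

lemma unital_cptpI:
  "Ks \<noteq> [] \<Longrightarrow> kraus_tp n Ks \<Longrightarrow> kraus_unital n Ks \<Longrightarrow> unital_cptp n (kraus_apply Ks)"
  unfolding unital_cptp_def using Ks_carrier foldr_kraus_tp_iff foldr_kraus_unital_iff by blast

end

lemma unital_cptpE:
  assumes "unital_cptp n E"
  obtains Ks where "\<forall>K\<in>set Ks. K \<in> carrier_mat n n" "kraus_tp n Ks" "kraus_unital n Ks"
    "\<And>\<rho>. \<rho> \<in> carrier_mat n n \<Longrightarrow> E \<rho> = kraus_apply Ks \<rho>"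
  using assms foldr_kraus_tp_iff foldr_kraus_unital_iff unfolding unital_cptp_def by metis

definition kraus_family :: "nat \<Rightarrow> nat \<Rightarrow> (nat \<Rightarrow> nat \<Rightarrow> complex mat) \<Rightarrow> complex mat list" where
  "kraus_family a b K = map (\<lambda>(i,j). K i j) (List.product [0..<a] [0..<b])"

lemma sum_kraus_family:
  "(\<Sum>l<length (kraus_family a b K). F (kraus_family a b K ! l)) = (\<Sum>i<a. \<Sum>j<b. F (K i j))"
proof -
  let ?xs = "List.product [0..<a] [0..<b]"
  have "(\<Sum>l<length (kraus_family a b K). F (kraus_family a b K ! l))
      = sum_list (map (\<lambda>(i,j). F (K i j)) ?xs)"
    unfolding kraus_family_def by (simp add: sum_list_sum_nth atLeast0LessThan case_prod_beta)
  also have "\<dots> = (\<Sum>(i,j)\<in>{..<a} \<times> {..<b}. F (K i j))"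
    by (simp add: sum_list_distinct_conv_sum_set distinct_product atLeast0LessThan)
  also have "\<dots> = (\<Sum>i<a. \<Sum>j<b. F (K i j))"
    by (simp add: sum.cartesian_product)
  finally show ?thesis .
qed

lemma kraus_family_carrier:
  "(\<And>i j. i < a \<Longrightarrow> j < b \<Longrightarrow> K i j \<in> carrier_mat n n) \<Longrightarrow>
   \<forall>M\<in>set (kraus_family a b K). M \<in> carrier_mat n n"
  unfolding kraus_family_def by auto

lemma kraus_family_nonempty: "0 < a \<Longrightarrow> 0 < b \<Longrightarrow> kraus_family a b K \<noteq> []"
  by (simp add: kraus_family_def flip: length_greater_0_conv)

lemma kraus_tp_family_iff:
  "kraus_tp n (kraus_family a b K) \<longleftrightarrow> (\<forall>c<n. \<forall>d<n.
     (\<Sum>i<a. \<Sum>j<b. \<Sum>x<n. cnj (K i j $$ (x,d)) * K i j $$ (x,c)) = (if d = c then 1 else 0))"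
  unfolding kraus_tp_def
  by (simp only: sum_kraus_family[where F = "\<lambda>M. \<Sum>x<n. cnj (M $$ (x,d)) * M $$ (x,c)" for c d])

lemma kraus_unital_family_iff:
  "kraus_unital n (kraus_family a b K) \<longleftrightarrow> (\<forall>x<n. \<forall>y<n.
     (\<Sum>i<a. \<Sum>j<b. \<Sum>z<n. K i j $$ (x,z) * cnj (K i j $$ (y,z))) = (if x = y then 1 else 0))"
  unfolding kraus_unital_def
  by (simp only: sum_kraus_family[where F = "\<lambda>M. \<Sum>z<n. M $$ (x,z) * cnj (M $$ (y,z))" for x y])

lemma kraus_apply_family_index:
  assumes "\<And>i j. i < a \<Longrightarrow> j < b \<Longrightarrow> K i j \<in> carrier_mat n n" "\<rho> \<in> carrier_mat n n" "x < n" "y < n"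
  shows "kraus_apply (kraus_family a b K) \<rho> $$ (x,y) =
    (\<Sum>i<a. \<Sum>j<b. \<Sum>c<n. \<Sum>d<n. K i j $$ (x,c) * \<rho> $$ (c,d) * cnj (K i j $$ (y,d)))"
  using kraus_apply_index[OF kraus_family_carrier[OF assms(1)] assms(2-4)]
  by (simp only: sum_kraus_family[where
        F = "\<lambda>M. \<Sum>c<n. \<Sum>d<n. M $$ (x,c) * \<rho> $$ (c,d) * cnj (M $$ (y,d))"])

context
  fixes n :: nat and Ks :: "complex mat list" and \<rho> :: "complex mat"
  assumes Ks: "\<forall>K\<in>set Ks. K \<in> carrier_mat n n" and \<rho>: "\<rho> \<in> carrier_mat n n"
begin

lemma kraus_apply_hermitian:
  assumes herm: "\<And>i j. i < n \<Longrightarrow> j < n \<Longrightarrow> cnj (\<rho> $$ (j,i)) = \<rho> $$ (i,j)" and xy: "x < n" "y < n"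
  shows "cnj (kraus_apply Ks \<rho> $$ (y,x)) = kraus_apply Ks \<rho> $$ (x,y)"
proof -
  have "cnj (\<Sum>c<n. \<Sum>d<n. Ks!l $$ (y,c) * \<rho> $$ (c,d) * cnj (Ks!l $$ (x,d)))
      = (\<Sum>d<n. \<Sum>c<n. Ks!l $$ (x,d) * \<rho> $$ (d,c) * cnj (Ks!l $$ (y,c)))" for l
    using herm by (subst sum.swap) (auto simp: cnj_sum mult_ac intro!: sum.cong)
  then show ?thesis
    using xy by (simp add: kraus_apply_index[OF Ks \<rho>] cnj_sum)
qed

lemma qform_kraus_apply:
  "qform n (\<lambda>x y. kraus_apply Ks \<rho> $$ (x,y)) v =
    (\<Sum>l<length Ks. qform n (\<lambda>c d. \<rho> $$ (c,d)) (\<lambda>c. \<Sum>y<n. cnj (Ks!l $$ (y,c)) * v y))"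
proof -
  have "qform n (\<lambda>x y. kraus_apply Ks \<rho> $$ (x,y)) v = qform n (\<lambda>x y. \<Sum>l<length Ks.
      \<Sum>c<n. \<Sum>d<n. Ks!l $$ (x,c) * \<rho> $$ (c,d) * cnj (Ks!l $$ (y,d))) v"
    by (rule qform_cong) (simp add: kraus_apply_index[OF Ks \<rho>])
  also have "\<dots> = (\<Sum>l<length Ks. qform n (\<lambda>x y.
      \<Sum>c<n. \<Sum>d<n. Ks!l $$ (x,c) * \<rho> $$ (c,d) * cnj (Ks!l $$ (y,d))) v)"
    by (rule qform_sum)
  finally show ?thesis by (simp only: qform_sandwich)
qed

lemma kraus_apply_trace:
  assumes tp: "kraus_tp n Ks"
  shows "(\<Sum>x<n. kraus_apply Ks \<rho> $$ (x,x)) = (\<Sum>c<n. \<rho> $$ (c,c))"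
proof -
  let ?K = "\<lambda>l x c. Ks!l $$ (x,c)" and ?L = "length Ks"
  have "(\<Sum>x<n. kraus_apply Ks \<rho> $$ (x,x))
      = (\<Sum>x<n. \<Sum>l<?L. \<Sum>c<n. \<Sum>d<n. \<rho> $$ (c,d) * (cnj (?K l x d) * ?K l x c))"
    by (simp add: kraus_apply_index[OF Ks \<rho>] mult_ac)
  also have "\<dots> = (\<Sum>c<n. \<Sum>d<n. \<Sum>l<?L. \<Sum>x<n. \<rho> $$ (c,d) * (cnj (?K l x d) * ?K l x c))"
    by (subst sum.swap, subst (2) sum.swap, subst sum.swap, subst (3) sum.swap,
        subst (2) sum.swap, rule refl)
  also have "\<dots> = (\<Sum>c<n. \<Sum>d<n. \<rho> $$ (c,d) * (if d = c then 1 else 0))"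
    using tp unfolding kraus_tp_def by (intro sum.cong refl) (auto simp flip: sum_distrib_left)
  finally show ?thesis by (simp add: if_distrib cong: if_cong)
qed

end

lemma kraus_apply_density:
  assumes Ks: "\<forall>K\<in>set Ks. K \<in> carrier_mat n n" and tp: "kraus_tp n Ks" and \<rho>: "density n \<rho>"
  shows "density n (kraus_apply Ks \<rho>)"
proof -
  have \<rho>_carrier: "\<rho> \<in> carrier_mat n n" and \<rho>_psd: "psd n (\<lambda>i j. \<rho> $$ (i,j))"
    using \<rho> by (auto simp: density_iff_psd)
  then have "0 \<le> Re (qform n (\<lambda>x y. kraus_apply Ks \<rho> $$ (x,y)) v)" for v
    unfolding qform_kraus_apply[OF Ks \<rho>_carrier] psd_def by (simp add: sum_nonneg)
  then show ?thesis
    using \<rho>_psd kraus_apply_carrier[OF Ks \<rho>_carrier] kraus_apply_hermitian[OF Ks \<rho>_carrier]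
      kraus_apply_trace[OF Ks \<rho>_carrier tp] density_trace[OF \<rho>]
    unfolding density_iff_psd psd_def by auto
qed

lemma Re_mult_cnj: "Re (a * r * cnj a) = (cmod a)\<^sup>2 * Re r"
proof -
  have "(cmod a)\<^sup>2 = (Re a)\<^sup>2 + (Im a)\<^sup>2" by (rule cmod_power2)
  then show ?thesis by (simp add: algebra_simps power2_eq_square)
qed

text \<open>By unitality every output diagonal entry is a convex combination of the diagonal entries of
  a diagonal input.\<close>
lemma kraus_apply_diag_le:
  assumes Ks: "\<forall>K\<in>set Ks. K \<in> carrier_mat n n" and unital: "kraus_unital n Ks"
    and \<rho>: "\<rho> \<in> carrier_mat n n" and diag: "\<And>c d. c < n \<Longrightarrow> d < n \<Longrightarrow> c \<noteq> d \<Longrightarrow> \<rho> $$ (c,d) = 0"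
    and bound: "\<And>c. c < n \<Longrightarrow> Re (\<rho> $$ (c,c)) \<le> l" and x: "x < n"
  shows "Re (kraus_apply Ks \<rho> $$ (x,x)) \<le> l"
proof -
  let ?K = "\<lambda>k c. Ks!k $$ (x,c)"
  have "kraus_apply Ks \<rho> $$ (x,x) = (\<Sum>k<length Ks. \<Sum>c<n. \<Sum>d<n. ?K k c * \<rho> $$ (c,d) * cnj (?K k d))"
    using kraus_apply_index[OF Ks \<rho> x x] .
  also have "\<dots> = (\<Sum>k<length Ks. \<Sum>c<n. \<Sum>d<n. if d = c then ?K k c * \<rho> $$ (c,c) * cnj (?K k c) else 0)"
    using diag by (intro sum.cong refl) auto
  also have "\<dots> = (\<Sum>k<length Ks. \<Sum>c<n. ?K k c * \<rho> $$ (c,c) * cnj (?K k c))"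
    by simp
  finally have "Re (kraus_apply Ks \<rho> $$ (x,x))
      = (\<Sum>k<length Ks. \<Sum>c<n. (cmod (?K k c))\<^sup>2 * Re (\<rho> $$ (c,c)))"
    by (simp only: Re_sum Re_mult_cnj)
  also have "\<dots> \<le> (\<Sum>k<length Ks. \<Sum>c<n. (cmod (?K k c))\<^sup>2 * l)"
    using bound by (intro sum_mono mult_left_mono) auto
  also have "\<dots> = l * Re (\<Sum>k<length Ks. \<Sum>c<n. ?K k c * cnj (?K k c))"
    by (simp add: Re_sum sum_distrib_left complex_mult_cnj cmod_power2 mult.commute)
  also have "\<dots> = l" using unital x unfolding kraus_unital_def by auto
  finally show ?thesis .
qed

lemma cadj_one [simp]: "cadj (1\<^sub>m n) = 1\<^sub>m n"
  by (auto simp: cadj_def)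

lemma kraus_apply_one: "\<rho> \<in> carrier_mat n n \<Longrightarrow> kraus_apply [1\<^sub>m n] \<rho> = \<rho>"
  by (simp add: kraus_apply_def)

lemma unital_cptp_one: "unital_cptp n (kraus_apply [1\<^sub>m n])"
  unfolding unital_cptp_def by (intro exI[of _ "[1\<^sub>m n]"]) simp

lemma reach_subset: "X \<subseteq> Y \<Longrightarrow> X \<subseteq> Omega dW dS \<Longrightarrow> reach dW dS X Y"
  unfolding reach_def Omega_def
  using unital_cptp_one kraus_apply_one density_carrier by (metis in_mono mem_Collect_eq)

lemma ptrace_S_index: "i < dW \<Longrightarrow> j < dW \<Longrightarrow> ptrace_S dW dS \<sigma> $$ (i,j) = (\<Sum>s<dS. \<sigma> $$ (i*dS + s, j*dS + s))"
  unfolding ptrace_S_def by simp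

lemma ptrace_W_index: "s < dS \<Longrightarrow> t < dS \<Longrightarrow> ptrace_W dW dS \<sigma> $$ (s,t) = (\<Sum>i<dW. \<sigma> $$ (i*dS + s, i*dS + t))"
  unfolding ptrace_W_def by simp

lemma qform_split:
  "qform (m*n) A v = (\<Sum>i<m. \<Sum>j<m. \<Sum>s<n. \<Sum>t<n. cnj (v (i*n+s)) * A (i*n+s) (j*n+t) * v (j*n+t))"
  unfolding qform_def sum_lessThan_mult by (intro sum.cong refl sum.swap)

lemma ptrace_W_density:
  assumes "density (dW*dS) \<sigma>"
  shows "density dS (ptrace_W dW dS \<sigma>)"
proof -
  have \<sigma>_psd: "psd (dW*dS) (\<lambda>x y. \<sigma> $$ (x,y))" and \<sigma>_trace: "(\<Sum>x<dW*dS. \<sigma> $$ (x,x)) = 1"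
    using assms by (auto simp: density_iff_psd)
  let ?P = "ptrace_W dW dS \<sigma>"
  let ?block = "\<lambda>i s t. \<sigma> $$ (i*dS + s, i*dS + t)"
  have herm: "cnj (?P $$ (t,s)) = ?P $$ (s,t)" if "s < dS" "t < dS" for s t
    using that \<sigma>_psd mult_index_less[of _ dW _ dS] unfolding psd_def
    by (auto simp: ptrace_W_index cnj_sum intro!: sum.cong)
  have trace: "(\<Sum>s<dS. ?P $$ (s,s)) = 1"
    using \<sigma>_trace by (simp add: ptrace_W_index sum_lessThan_mult, subst sum.swap, simp)
  have pos: "0 \<le> Re (qform dS (\<lambda>s t. ?P $$ (s,t)) v)" for v
  proof -
    \<comment> \<open>the form of the i-th diagonal block of \<sigma> at v is that of \<sigma> at v placed in block i\<close>
    define w where "w i x = (if x div dS = i then v (x mod dS) else 0)" for i x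
    have block: "qform (dW*dS) (\<lambda>x y. \<sigma> $$ (x,y)) (w i) = qform dS (?block i) v" if "i < dW" for i
    proof -
      have "(\<Sum>s<dS. \<Sum>t<dS. cnj (w i (i'*dS+s)) * \<sigma> $$ (i'*dS+s, j'*dS+t) * w i (j'*dS+t))
          = (if i' = i \<and> j' = i then qform dS (?block i) v else 0)" for i' j'
        unfolding w_def qform_def by (auto intro!: sum.cong)
      then show ?thesis
        unfolding qform_split using that by (simp add: sum_delta_pair)
    qed
    have "qform dS (\<lambda>s t. ?P $$ (s,t)) v = (\<Sum>s<dS. \<Sum>t<dS. \<Sum>i<dW. cnj (v s) * ?block i s t * v t)"
      unfolding qform_def by (intro sum.cong refl)
          (simp add: ptrace_W_index sum_distrib_left sum_distrib_right)
    also have "\<dots> = (\<Sum>i<dW. qform dS (?block i) v)"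
      unfolding qform_def by (subst (2) sum.swap, subst sum.swap, rule refl)
    also have "\<dots> = (\<Sum>i<dW. qform (dW*dS) (\<lambda>x y. \<sigma> $$ (x,y)) (w i))"
      by (simp add: block)
    finally show ?thesis
      using \<sigma>_psd unfolding psd_def by (simp add: Re_sum sum_nonneg)
  qed
  show ?thesis
    unfolding density_iff_psd psd_def using herm trace pos by (auto simp: ptrace_W_def)
qed

definition tensor_state :: "nat \<Rightarrow> nat \<Rightarrow> nat \<Rightarrow> complex mat \<Rightarrow> complex mat" where
  "tensor_state dW dS k \<tau> = mat (dW*dS) (dW*dS) (\<lambda>(x,y).
     if x div dS = y div dS \<and> x div dS < k then \<tau> $$ (x mod dS, y mod dS) / of_nat k else 0)"

definition maximally_mixed :: "nat \<Rightarrow> complex mat" where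
  "maximally_mixed n = mat n n (\<lambda>(s,t). if s = t then 1 / of_nat n else 0)"

lemma maximally_mixed_density: "0 < n \<Longrightarrow> density n (maximally_mixed n)"
proof -
  assume n: "0 < n"
  have "qform n (\<lambda>i j. maximally_mixed n $$ (i,j)) v =
      qform n (\<lambda>i j. if i = j then 1 else 0) v / of_nat n"
    for v unfolding qform_def maximally_mixed_def by (auto simp: sum_divide_distrib intro!: sum.cong)
  then have "0 \<le> Re (qform n (\<lambda>i j. maximally_mixed n $$ (i,j)) v)" for v
    by (simp add: qform_identity Re_sum complex_mult_cnj sum_nonneg divide_nonneg_nonneg)
  then show ?thesis
    using n unfolding density_iff_psd psd_def by (auto simp: maximally_mixed_def)
qed

lemma tensor_state_index:
  assumes "i < dW" "j < dW" "s < dS" "t < dS"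
  shows "tensor_state dW dS k \<tau> $$ (i*dS+s, j*dS+t) =
      (if i = j \<and> i < k then \<tau> $$ (s,t) / of_nat k else 0)"
  using assms mult_index_less[of i dW s dS] mult_index_less[of j dW t dS]
  unfolding tensor_state_def by simp

context
  fixes dW dS k :: nat and \<tau> :: "complex mat"
  assumes k: "1 \<le> k" "k \<le> dW" and \<tau>: "density dS \<tau>"
begin

lemma tensor_state_density: "density (dW*dS) (tensor_state dW dS k \<tau>)"
proof -
  have \<tau>_psd: "psd dS (\<lambda>s t. \<tau> $$ (s,t))" and \<tau>_trace: "(\<Sum>s<dS. \<tau> $$ (s,s)) = 1"
    using \<tau> by (auto simp: density_iff_psd)
  let ?T = "tensor_state dW dS k \<tau>"
  have herm: "cnj (?T $$ (y,x)) = ?T $$ (x,y)" if "x < dW*dS" "y < dW*dS" for x y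
    using that \<tau>_psd unfolding tensor_state_def psd_def
    by (cases "dS = 0") auto
  have trace: "(\<Sum>x<dW*dS. ?T $$ (x,x)) = 1"
  proof -
    have "(\<Sum>x<dW*dS. ?T $$ (x,x)) = (\<Sum>i<dW. if i < k then (\<Sum>s<dS. \<tau> $$ (s,s) / of_nat k) else 0)"
      by (simp add: sum_lessThan_mult tensor_state_index sum_if_const_cond)
    then show ?thesis using k \<tau>_trace by (simp add: sum_lessThan_if_less flip: sum_divide_distrib)
  qed
  have pos: "0 \<le> Re (qform (dW*dS) (\<lambda>x y. ?T $$ (x,y)) v)" for v
  proof -
    have "(\<Sum>s<dS. \<Sum>t<dS. cnj (v (i*dS+s)) * ?T $$ (i*dS+s, j*dS+t) * v (j*dS+t))
       = (if j = i then (if i < k then qform dS (\<lambda>s t. \<tau> $$ (s,t)) (\<lambda>s. v (i*dS+s)) / of_nat k else 0)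
          else 0)"
      if "i < dW" "j < dW" for i j
      using that by (simp add: qform_def tensor_state_index sum_divide_distrib)
    then have "qform (dW*dS) (\<lambda>x y. ?T $$ (x,y)) v
       = (\<Sum>i<dW. if i < k then qform dS (\<lambda>s t. \<tau> $$ (s,t)) (\<lambda>s. v (i*dS+s)) / of_nat k else 0)"
      unfolding qform_split by simp
    then show ?thesis
      using \<tau>_psd unfolding psd_def by (auto simp: Re_sum intro!: sum_nonneg)
  qed
  show ?thesis
    unfolding density_iff_psd psd_def using herm trace pos by (auto simp: tensor_state_def)
qed

lemma ptrace_S_tensor_state: "ptrace_S dW dS (tensor_state dW dS k \<tau>) = proj_norm dW k"
proof (rule eq_matI)
  fix i j assume "i < dim_row (proj_norm dW k)" "j < dim_col (proj_norm dW k)"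
  then have ij: "i < dW" "j < dW" unfolding proj_norm_def by auto
  then show "ptrace_S dW dS (tensor_state dW dS k \<tau>) $$ (i,j) = proj_norm dW k $$ (i,j)"
    using density_trace[OF \<tau>]
    by (auto simp: ptrace_S_index tensor_state_index proj_norm_def sum_if_const_cond
        sum_divide_distrib[symmetric])
qed (auto simp: ptrace_S_def proj_norm_def)

lemma ptrace_W_tensor_state: "ptrace_W dW dS (tensor_state dW dS k \<tau>) = \<tau>"
proof (rule eq_matI)
  fix s t assume "s < dim_row \<tau>" "t < dim_col \<tau>"
  then have st: "s < dS" "t < dS" using density_carrier[OF \<tau>] by auto
  have "(\<Sum>i<dW. if i < k then \<tau> $$ (s,t) / of_nat k else 0) = \<tau> $$ (s,t)"
    using k by (simp add: sum_lessThan_if_less)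
  then show "ptrace_W dW dS (tensor_state dW dS k \<tau>) $$ (s,t) = \<tau> $$ (s,t)"
    using st by (simp add: ptrace_W_index tensor_state_index)
qed (use density_carrier[OF \<tau>] in \<open>auto simp: ptrace_W_def\<close>)

lemma tensor_state_in_currency_set: "tensor_state dW dS k \<tau> \<in> currency_set dW dS k"
  unfolding currency_set_def Omega_def using tensor_state_density ptrace_S_tensor_state by simp

end

section \<open>Relabelling the levels of W\<close>

definition doubly_stochastic :: "nat \<Rightarrow> (nat \<Rightarrow> nat \<Rightarrow> real) \<Rightarrow> bool" where
  "doubly_stochastic n p \<longleftrightarrow> (\<forall>i<n. \<forall>j<n. 0 \<le> p i j) \<and>
     (\<forall>i<n. (\<Sum>j<n. p i j) = 1) \<and> (\<forall>j<n. (\<Sum>i<n. p i j) = 1)"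

text \<open>sqrt (p i j) |i\<rangle>\<langle>j| \<otimes> 1_S: the channel dephases W and relabels its levels by the
  Markov kernel p, leaving S alone.\<close>
definition transition_op :: "nat \<Rightarrow> nat \<Rightarrow> (nat \<Rightarrow> nat \<Rightarrow> real) \<Rightarrow> nat \<Rightarrow> nat \<Rightarrow> complex mat" where
  "transition_op dW dS p i j = mat (dW*dS) (dW*dS) (\<lambda>(x,c).
     if x div dS = i \<and> c div dS = j \<and> x mod dS = c mod dS then of_real (sqrt (p i j)) else 0)"

definition transition_channel :: "nat \<Rightarrow> nat \<Rightarrow> (nat \<Rightarrow> nat \<Rightarrow> real) \<Rightarrow> complex mat \<Rightarrow> complex mat" where
  "transition_channel dW dS p = kraus_apply (kraus_family dW dW (transition_op dW dS p))"

lemma transition_op_index: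
  assumes "i' < dW" "j' < dW" "s < dS" "t < dS"
  shows "transition_op dW dS p i j $$ (i'*dS + s, j'*dS + t) =
    (if i' = i \<and> j' = j \<and> s = t then of_real (sqrt (p i j)) else 0)"
  using assms mult_index_less[of i' dW s dS] mult_index_less[of j' dW t dS]
  unfolding transition_op_def by simp

context
  fixes dW dS :: nat and p :: "nat \<Rightarrow> nat \<Rightarrow> real"
  assumes dW: "0 < dW" and dS: "0 < dS" and p: "doubly_stochastic dW p"
begin

lemma transition_weight:
  assumes "i < dW" "j < dW"
  shows "of_real (sqrt (p i j)) * of_real (sqrt (p i j)) = (of_real (p i j) :: complex)"
    "of_real (sqrt (p i j)) * (z::complex) * of_real (sqrt (p i j)) = of_real (p i j) * z"
proof -
  show sq: "of_real (sqrt (p i j)) * of_real (sqrt (p i j)) = (of_real (p i j) :: complex)"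
    using p assms unfolding doubly_stochastic_def by (simp flip: of_real_mult)
  show "of_real (sqrt (p i j)) * (z::complex) * of_real (sqrt (p i j)) = of_real (p i j) * z"
    by (simp add: mult_ac sq[symmetric])
qed

lemma transition_kraus_tp: "kraus_tp (dW*dS) (kraus_family dW dW (transition_op dW dS p))"
  unfolding kraus_tp_family_iff all_lessThan_mult[OF dS]
proof (intro allI impI)
  fix j1 s1 j2 s2 assume idx: "j1 < dW" "s1 < dS" "j2 < dW" "s2 < dS"
  let ?K = "transition_op dW dS p"
  have "(\<Sum>a<dW*dS. cnj (?K i j $$ (a, j2*dS+s2)) * ?K i j $$ (a, j1*dS+s1))
      = (\<Sum>i'<dW. \<Sum>s<dS. if i' = i \<and> s = s2 then
           (if j = j2 \<and> j1 = j2 \<and> s1 = s2 then of_real (p i j) else 0) else 0)"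
    if "i < dW" "j < dW" for i j
    unfolding sum_lessThan_mult using idx that
    by (intro sum.cong refl) (auto simp: transition_op_index transition_weight)
  also have "\<dots> i j = (if j = j2 \<and> j1 = j2 \<and> s1 = s2 then of_real (p i j) else 0)" if "i < dW" for i j
    using idx that by (simp add: sum_delta_pair)
  finally have "(\<Sum>i<dW. \<Sum>j<dW. \<Sum>a<dW*dS. cnj (?K i j $$ (a, j2*dS+s2)) * ?K i j $$ (a, j1*dS+s1))
      = (\<Sum>i<dW. \<Sum>j<dW. if j = j2 \<and> j1 = j2 \<and> s1 = s2 then of_real (p i j) else 0)"
    by simp
  also have "\<dots> = (if j2*dS+s2 = j1*dS+s1 then 1 else 0)"
    using idx p unfolding doubly_stochastic_def
    by (auto simp: if_distrib[of "\<lambda>P. P \<and> _"] simp flip: of_real_sum cong: if_cong)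
  finally show "(\<Sum>i<dW. \<Sum>j<dW. \<Sum>a<dW*dS. cnj (?K i j $$ (a, j2*dS+s2)) * ?K i j $$ (a, j1*dS+s1))
      = (if j2*dS+s2 = j1*dS+s1 then 1 else 0)" .
qed

lemma transition_kraus_unital: "kraus_unital (dW*dS) (kraus_family dW dW (transition_op dW dS p))"
  unfolding kraus_unital_family_iff all_lessThan_mult[OF dS]
proof (intro allI impI)
  fix i1 s1 i2 s2 assume idx: "i1 < dW" "s1 < dS" "i2 < dW" "s2 < dS"
  let ?K = "transition_op dW dS p"
  have "(\<Sum>z<dW*dS. ?K i j $$ (i1*dS+s1, z) * cnj (?K i j $$ (i2*dS+s2, z)))
      = (\<Sum>j'<dW. \<Sum>t<dS. if j' = j \<and> t = s1 then
           (if i = i1 \<and> i2 = i1 \<and> s2 = s1 then of_real (p i j) else 0) else 0)"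
    if "i < dW" "j < dW" for i j
    unfolding sum_lessThan_mult using idx that
    by (intro sum.cong refl) (auto simp: transition_op_index transition_weight)
  also have "\<dots> i j = (if i = i1 \<and> i2 = i1 \<and> s2 = s1 then of_real (p i j) else 0)" if "j < dW" for i j
    using idx that by (simp add: sum_delta_pair)
  finally have "(\<Sum>i<dW. \<Sum>j<dW. \<Sum>z<dW*dS. ?K i j $$ (i1*dS+s1, z) * cnj (?K i j $$ (i2*dS+s2, z)))
      = (\<Sum>i<dW. \<Sum>j<dW. if i = i1 \<and> i2 = i1 \<and> s2 = s1 then of_real (p i j) else 0)"
    by simp
  also have "\<dots> = (if i1*dS+s1 = i2*dS+s2 then 1 else 0)"
    using idx p unfolding doubly_stochastic_def
    by (auto simp: sum_if_const_cond if_distrib[of "\<lambda>P. P \<and> _"] simp flip: of_real_sum cong: if_cong)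
  finally show "(\<Sum>i<dW. \<Sum>j<dW. \<Sum>z<dW*dS. ?K i j $$ (i1*dS+s1, z) * cnj (?K i j $$ (i2*dS+s2, z)))
      = (if i1*dS+s1 = i2*dS+s2 then 1 else 0)" .
qed

lemma unital_cptp_transition_channel: "unital_cptp (dW*dS) (transition_channel dW dS p)"
  unfolding transition_channel_def
proof (rule unital_cptpI[OF kraus_family_carrier])
  show "kraus_family dW dW (transition_op dW dS p) \<noteq> []"
    using dW by (intro kraus_family_nonempty)
qed (simp_all add: transition_op_def transition_kraus_tp transition_kraus_unital)

lemma transition_channel_index:
  assumes \<sigma>: "\<sigma> \<in> carrier_mat (dW*dS) (dW*dS)" and idx: "i1 < dW" "s1 < dS" "i2 < dW" "s2 < dS"
  shows "transition_channel dW dS p \<sigma> $$ (i1*dS+s1, i2*dS+s2) =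
    (if i1 = i2 then (\<Sum>j<dW. of_real (p i1 j) * \<sigma> $$ (j*dS+s1, j*dS+s2)) else 0)"
proof -
  let ?K = "transition_op dW dS p"
  have "(\<Sum>c<dW*dS. \<Sum>d<dW*dS. ?K i j $$ (i1*dS+s1, c) * \<sigma> $$ (c,d) * cnj (?K i j $$ (i2*dS+s2, d)))
      = (\<Sum>j'<dW. \<Sum>t<dS. \<Sum>j''<dW. \<Sum>u<dS. if j' = j \<and> t = s1 then (if j'' = j \<and> u = s2 then
           (if i = i1 \<and> i = i2 then of_real (p i j) * \<sigma> $$ (j*dS+s1, j*dS+s2) else 0) else 0) else 0)"
    if "i < dW" "j < dW" for i j
    unfolding sum_lessThan_mult using idx that
    by (intro sum.cong refl) (auto simp: transition_op_index transition_weight)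
  also have "\<dots> i j = (if i = i1 \<and> i = i2 then of_real (p i j) * \<sigma> $$ (j*dS+s1, j*dS+s2) else 0)"
    if "j < dW" for i j
    using idx that by (simp add: sum_if_const_cond sum_delta_pair)
  finally have "transition_channel dW dS p \<sigma> $$ (i1*dS+s1, i2*dS+s2) =
      (\<Sum>i<dW. if i = i1 \<and> i = i2 then (\<Sum>j<dW. of_real (p i j) * \<sigma> $$ (j*dS+s1, j*dS+s2)) else 0)"
    using idx mult_index_less[of i1 dW s1 dS] mult_index_less[of i2 dW s2 dS]
    by (simp add: transition_channel_def kraus_apply_family_index[OF _ \<sigma>] transition_op_def
        sum_if_const_cond)
  then show ?thesis
    using idx by (cases "i1 = i2") (auto intro!: sum.neutral)
qed

lemma transition_channel_Omega: "\<sigma> \<in> Omega dW dS \<Longrightarrow> transition_channel dW dS p \<sigma> \<in> Omega dW dS"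
  unfolding Omega_def transition_channel_def
  by (auto intro!: kraus_apply_density kraus_family_carrier transition_kraus_tp simp: transition_op_def)

lemma ptrace_W_transition_channel:
  assumes \<sigma>: "\<sigma> \<in> carrier_mat (dW*dS) (dW*dS)"
  shows "ptrace_W dW dS (transition_channel dW dS p \<sigma>) = ptrace_W dW dS \<sigma>"
proof (rule eq_matI)
  fix s t assume "s < dim_row (ptrace_W dW dS \<sigma>)" "t < dim_col (ptrace_W dW dS \<sigma>)"
  then have st: "s < dS" "t < dS" by (auto simp: ptrace_W_def)
  have "ptrace_W dW dS (transition_channel dW dS p \<sigma>) $$ (s,t)
      = (\<Sum>i<dW. \<Sum>j<dW. of_real (p i j) * \<sigma> $$ (j*dS+s, j*dS+t))"
    using st by (simp add: ptrace_W_index transition_channel_index[OF \<sigma>])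
  also have "\<dots> = (\<Sum>j<dW. of_real (\<Sum>i<dW. p i j) * \<sigma> $$ (j*dS+s, j*dS+t))"
    by (subst sum.swap) (simp add: sum_distrib_right)
  also have "\<dots> = ptrace_W dW dS \<sigma> $$ (s,t)"
    using p st unfolding doubly_stochastic_def by (simp add: ptrace_W_index)
  finally show "ptrace_W dW dS (transition_channel dW dS p \<sigma>) $$ (s,t) = ptrace_W dW dS \<sigma> $$ (s,t)" .
qed (auto simp: ptrace_W_def)

lemma ptrace_S_transition_channel:
  assumes \<sigma>: "\<sigma> \<in> carrier_mat (dW*dS) (dW*dS)" and ij: "i < dW" "i' < dW"
  shows "ptrace_S dW dS (transition_channel dW dS p \<sigma>) $$ (i,i') =
    (if i = i' then (\<Sum>j<dW. of_real (p i j) * ptrace_S dW dS \<sigma> $$ (j,j)) else 0)"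
  using ij by (auto simp: ptrace_S_index transition_channel_index[OF \<sigma>] sum_distrib_left
      intro: sum.swap)

end

definition level_mixing :: "nat \<Rightarrow> nat \<Rightarrow> nat \<Rightarrow> real" where
  "level_mixing k i j = (if i < k \<and> j < k then 1 / real k else if i = j then 1 else 0)"

lemma doubly_stochastic_level_mixing:
  assumes "1 \<le> k" "k \<le> n"
  shows "doubly_stochastic n (level_mixing k)"
proof -
  have row: "(\<Sum>j<n. level_mixing k i j) = 1" if "i < n" for i
  proof (cases "i < k")
    case True
    then have "(\<Sum>j<n. level_mixing k i j) = (\<Sum>j<n. if j < k then 1 / real k else 0)"
      by (intro sum.cong refl) (auto simp: level_mixing_def)
    then show ?thesis using assms by (simp add: sum_lessThan_if_less)
  next
    case False
    then have "(\<Sum>j<n. level_mixing k i j) = (\<Sum>j<n. if j = i then 1 else 0)"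
      by (intro sum.cong refl) (auto simp: level_mixing_def)
    then show ?thesis using that by simp
  qed
  moreover have "level_mixing k i j = level_mixing k j i" for i j
    by (auto simp: level_mixing_def)
  ultimately show ?thesis unfolding doubly_stochastic_def by (auto simp: level_mixing_def)
qed

lemma ptrace_S_trace: "\<sigma> \<in> Omega dW dS \<Longrightarrow> (\<Sum>i<dW. ptrace_S dW dS \<sigma> $$ (i,i)) = 1"
  unfolding Omega_def using density_trace[of "dW*dS" \<sigma>] by (simp add: ptrace_S_index sum_lessThan_mult)

lemma level_mixing_into_currency_set:
  assumes k: "1 \<le> k" "k \<le> dW" and dS: "0 < dS" and \<sigma>: "\<sigma> \<in> Omega dW dS"
    and support: "\<And>i. k \<le> i \<Longrightarrow> i < dW \<Longrightarrow> ptrace_S dW dS \<sigma> $$ (i,i) = 0"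
  shows "transition_channel dW dS (level_mixing k) \<sigma> \<in> currency_set dW dS k"
proof -
  have p: "doubly_stochastic dW (level_mixing k)" using k by (rule doubly_stochastic_level_mixing)
  have dW: "0 < dW" using k by simp
  have \<sigma>_carrier: "\<sigma> \<in> carrier_mat (dW*dS) (dW*dS)" using \<sigma> by (simp add: Omega_def density_carrier)
  let ?\<rho> = "ptrace_S dW dS \<sigma>"
  have diag: "(\<Sum>j<dW. of_real (level_mixing k i j) * ?\<rho> $$ (j,j)) = (if i < k then 1 / of_nat k else 0)"
    if i: "i < dW" for i
  proof (cases "i < k")
    case True
    have "(\<Sum>j<dW. of_real (level_mixing k i j) * ?\<rho> $$ (j,j)) = (\<Sum>j<dW. ?\<rho> $$ (j,j) / of_nat k)"
      using True support by (intro sum.cong refl) (auto simp: level_mixing_def)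
    then show ?thesis using True ptrace_S_trace[OF \<sigma>] by (simp flip: sum_divide_distrib)
  next
    case False
    then have "(\<Sum>j<dW. of_real (level_mixing k i j) * ?\<rho> $$ (j,j)) =
        (\<Sum>j<dW. if j = i then ?\<rho> $$ (j,j) else 0)"
      by (intro sum.cong refl) (auto simp: level_mixing_def)
    then show ?thesis using False i support by simp
  qed
  have "ptrace_S dW dS (transition_channel dW dS (level_mixing k) \<sigma>) = proj_norm dW k"
  proof (rule eq_matI)
    fix i i' assume "i < dim_row (proj_norm dW k)" "i' < dim_col (proj_norm dW k)"
    then show "ptrace_S dW dS (transition_channel dW dS (level_mixing k) \<sigma>) $$ (i,i')
        = proj_norm dW k $$ (i,i')"
      by (simp add: ptrace_S_transition_channel[OF dW dS p \<sigma>_carrier] diag proj_norm_def)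
  qed (auto simp: ptrace_S_def proj_norm_def)
  then show ?thesis
    using transition_channel_Omega[OF dW dS p \<sigma>] by (simp add: currency_set_def)
qed

section \<open>Positive semidefinite matrices\<close>

lemma qform_Suc:
  "qform (Suc n) A v = qform n A v + (\<Sum>j<n. cnj (v n) * A n j * v j)
     + (\<Sum>i<n. cnj (v i) * A i n * v n) + cnj (v n) * A n n * v n"
  unfolding qform_def by (simp add: sum.distrib)

lemma qform_upd_last: "qform n A (v(n := t)) = qform n A v"
  unfolding qform_def by (intro sum.cong refl) auto

lemma qform_unit:
  assumes "j < n"
  shows "qform n A (\<lambda>i. if i = j then 1 else 0) = A j j"
proof -
  have "qform n A (\<lambda>i. if i = j then 1 else 0) = (\<Sum>i<n. \<Sum>k<n. if i = j \<and> k = j then A i k else 0)"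
    unfolding qform_def by (intro sum.cong refl) auto
  then show ?thesis using assms by (simp add: sum_delta_pair)
qed

text \<open>The last column A(-,n)/sqrt(A n n) of a factor B with A = B B^*.\<close>
definition pivot :: "(nat \<Rightarrow> nat \<Rightarrow> complex) \<Rightarrow> nat \<Rightarrow> nat \<Rightarrow> complex" where
  "pivot A n i = (if Re (A n n) = 0 then 0 else A i n / of_real (sqrt (Re (A n n))))"

context
  fixes n :: nat and A :: "nat \<Rightarrow> nat \<Rightarrow> complex"
  assumes A: "psd (Suc n) A"
begin

lemma psd_herm: "i < Suc n \<Longrightarrow> j < Suc n \<Longrightarrow> cnj (A j i) = A i j"
  using A unfolding psd_def by blast

lemma psd_nonneg: "0 \<le> Re (qform (Suc n) A v)"
  using A unfolding psd_def by blast

lemma psd_last_diag: "A n n = of_real (Re (A n n))" "0 \<le> Re (A n n)"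
proof -
  show "A n n = of_real (Re (A n n))"
    using psd_herm[of n n] Reals_cnj_iff by (simp add: complex_is_Real_iff complex_eq_iff)
  show "0 \<le> Re (A n n)"
    using psd_nonneg[of "\<lambda>i. if i = n then 1 else 0"] by (simp add: qform_unit)
qed

text \<open>A nonzero entry A n j would let a test vector supported on j and n make the form negative.\<close>
lemma psd_zero_diag_row:
  assumes ann: "A n n = 0" and j: "j < n"
  shows "A n j = 0"
proof (rule ccontr)
  assume z0: "A n j \<noteq> 0"
  define z where "z = A n j"
  have hz: "A j n = cnj z" unfolding z_def using psd_herm[of j n] j by simp
  define R where "R = (\<bar>Re (A j j)\<bar> + 1) / (2 * (cmod z)\<^sup>2)"
  define s where "s = - complex_of_real R * z"
  define v where "v i = (if i = j then 1 else if i = n then s else 0)" for i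
  have vn: "v n = s" using j unfolding v_def by simp
  have vj: "v i = (if i = j then 1 else 0)" if "i < n" for i using that unfolding v_def by auto
  have q: "qform n A v = A j j"
    using qform_unit[OF j] by (simp add: qform_def vj)
  have s1: "(\<Sum>k<n. cnj (v n) * A n k * v k) = cnj s * z"
  proof -
    have "(\<Sum>k<n. cnj (v n) * A n k * v k) = (\<Sum>k<n. if k = j then cnj s * z else 0)"
      using vj vn unfolding z_def by (intro sum.cong refl) auto
    then show ?thesis using j by simp
  qed
  have s2: "(\<Sum>i<n. cnj (v i) * A i n * v n) = cnj z * s"
  proof -
    have "(\<Sum>i<n. cnj (v i) * A i n * v n) = (\<Sum>i<n. if i = j then cnj z * s else 0)"
      using vj vn hz by (intro sum.cong refl) auto
    then show ?thesis using j by simp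
  qed
  have "cnj s * z + cnj z * s = - complex_of_real (2 * R * (cmod z)\<^sup>2)"
    unfolding s_def by (simp add: algebra_simps flip: complex_norm_square)
  then have "qform (Suc n) A v = A j j - complex_of_real (2 * R * (cmod z)\<^sup>2)"
    unfolding qform_Suc q s1 s2 using ann by (simp add: add.assoc)
  then have "Re (qform (Suc n) A v) = Re (A j j) - 2 * R * (cmod z)\<^sup>2"
    by simp
  also have "\<dots> = Re (A j j) - (\<bar>Re (A j j)\<bar> + 1)"
    unfolding R_def using z0 z_def by (simp add: field_simps)
  finally have "Re (qform (Suc n) A v) = Re (A j j) - (\<bar>Re (A j j)\<bar> + 1)" .
  then show False using psd_nonneg[of v] by linarith
qed

lemma pivot_last:
  assumes j: "j < Suc n"
  shows "pivot A n n * cnj (pivot A n j) = A n j \<and> pivot A n j * cnj (pivot A n n) = A j n"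
proof (cases "Re (A n n) = 0")
  case True
  have "A n j = 0"
  proof (cases "j = n")
    case True
    then show ?thesis using psd_last_diag(1) \<open>Re (A n n) = 0\<close> by simp
  next
    case False
    then show ?thesis using j psd_zero_diag_row psd_last_diag(1) \<open>Re (A n n) = 0\<close> by simp
  qed
  moreover have "A j n = cnj (A n j)" using psd_herm[of j n] j by simp
  ultimately show ?thesis unfolding pivot_def using True by simp
next
  case False
  let ?r = "Re (A n n)"
  have sr: "complex_of_real (sqrt ?r) \<noteq> 0" using False psd_last_diag(2) by simp
  have pn: "pivot A n n = complex_of_real (sqrt ?r)"
    unfolding pivot_def using False psd_last_diag
    by (metis divide_self_if of_real_divide real_div_sqrt)
  have pj: "pivot A n j = A j n / complex_of_real (sqrt ?r)" unfolding pivot_def using False by simp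
  show ?thesis using sr psd_herm[of n j] psd_herm[of j n] j by (simp add: pn pj)
qed

text \<open>Removing the rank-one part carried by the last row and column leaves the form of A
  restricted to vectors whose last coordinate is chosen to minimize it.\<close>
lemma qform_schur_complement:
  "\<exists>t. qform n (\<lambda>i j. A i j - pivot A n i * cnj (pivot A n j)) v = qform (Suc n) A (v(n := t))"
proof (cases "Re (A n n) = 0")
  case True
  then have "qform n (\<lambda>i j. A i j - pivot A n i * cnj (pivot A n j)) v = qform (Suc n) A (v(n := 0))"
    unfolding pivot_def qform_Suc qform_upd_last by simp
  then show ?thesis by blast
next
  case False
  let ?r = "Re (A n n)"
  have r: "0 < ?r" using False psd_last_diag(2) by simp
  define u where "u = (\<Sum>j<n. A n j * v j)"
  have u': "(\<Sum>i<n. cnj (v i) * A i n) = cnj u"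
    unfolding u_def cnj_sum using psd_herm by (intro sum.cong refl) (simp add: mult.commute)
  have "pivot A n i * cnj (pivot A n j) = A i n * A n j / of_real ?r" if "j < n" for i j
  proof -
    have "of_real (sqrt ?r) * of_real (sqrt ?r) = (of_real ?r :: complex)"
      using r by (simp flip: of_real_mult)
    then show ?thesis
      unfolding pivot_def using False psd_herm[of n j] that by (simp add: field_simps)
  qed
  then have "qform n (\<lambda>i j. A i j - pivot A n i * cnj (pivot A n j)) v
      = qform n A v - (\<Sum>i<n. \<Sum>j<n. (cnj (v i) * A i n) * (A n j * v j) / of_real ?r)"
    unfolding qform_def by (simp add: algebra_simps sum_subtractf)
  also have "(\<Sum>i<n. \<Sum>j<n. (cnj (v i) * A i n) * (A n j * v j) / of_real ?r)
      = (\<Sum>i<n. cnj (v i) * A i n) * u / of_real ?r"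
    unfolding u_def sum_product by (simp add: sum_divide_distrib)
  finally have complement: "qform n (\<lambda>i j. A i j - pivot A n i * cnj (pivot A n j)) v
      = qform n A v - cnj u * u / of_real ?r"
    using u' by simp
  define t where "t = - u / of_real ?r"
  have "(\<Sum>j<n. cnj t * A n j * v j) = cnj t * u"
    unfolding u_def by (simp add: sum_distrib_left mult.assoc)
  moreover have "(\<Sum>i<n. cnj (v i) * A i n * t) = cnj u * t"
    by (simp only: sum_distrib_right[symmetric] u')
  ultimately have "qform (Suc n) A (v(n := t))
      = qform n A v + cnj t * u + cnj u * t + cnj t * A n n * t"
    unfolding qform_Suc qform_upd_last by simp
  also have "\<dots> = qform n A v - cnj u * u / of_real ?r"
    unfolding t_def using r by (subst psd_last_diag(1)) (simp add: field_simps)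
  finally show ?thesis using complement by metis
qed

lemma psd_schur_complement: "psd n (\<lambda>i j. A i j - pivot A n i * cnj (pivot A n j))"
  unfolding psd_def
proof (intro conjI allI impI)
  fix i j assume "i < n" "j < n"
  then show "cnj (A j i - pivot A n j * cnj (pivot A n i)) = A i j - pivot A n i * cnj (pivot A n j)"
    using psd_herm[of i j] by (simp add: mult.commute)
next
  fix v
  obtain t where "qform n (\<lambda>i j. A i j - pivot A n i * cnj (pivot A n j)) v
      = qform (Suc n) A (v(n := t))"
    using qform_schur_complement by blast
  then show "0 \<le> Re (qform n (\<lambda>i j. A i j - pivot A n i * cnj (pivot A n j)) v)"
    using psd_nonneg by simp
qed

end

lemma psd_factorization:
  "psd n A \<Longrightarrow> \<exists>B. \<forall>i<n. \<forall>j<n. A i j = (\<Sum>m<n. B i m * cnj (B j m))"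
proof (induction n arbitrary: A)
  case (Suc n)
  obtain B' where B': "\<forall>i<n. \<forall>j<n. A i j - pivot A n i * cnj (pivot A n j)
      = (\<Sum>m<n. B' i m * cnj (B' j m))"
    using Suc.IH[OF psd_schur_complement[OF Suc.prems]] by blast
  define B where "B i m = (if m < n then (if i < n then B' i m else 0) else pivot A n i)" for i m
  have "A i j = (\<Sum>m<Suc n. B i m * cnj (B j m))" if "i < Suc n" "j < Suc n" for i j
  proof (cases "i < n \<and> j < n")
    case True
    then show ?thesis using B' by (simp add: B_def algebra_simps)
  next
    case False
    then have "i = n \<or> j = n" using that by auto
    then show ?thesis using pivot_last[OF Suc.prems] that by (auto simp: B_def)
  qed
  then show ?case by blast
qed simp

lemma real_Cauchy_Schwarz:
  fixes a b :: "nat \<Rightarrow> real"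
  shows "(\<Sum>i<n. a i * b i)\<^sup>2 \<le> (\<Sum>i<n. (a i)\<^sup>2) * (\<Sum>i<n. (b i)\<^sup>2)"
proof -
  have square: "(a i * b j - a j * b i)\<^sup>2
      = (a i)\<^sup>2 * (b j)\<^sup>2 + (a j)\<^sup>2 * (b i)\<^sup>2 - 2 * ((a i * b i) * (a j * b j))"
    for i j by (simp add: power2_eq_square algebra_simps)
  have "0 \<le> (\<Sum>i<n. \<Sum>j<n. (a i * b j - a j * b i)\<^sup>2)" by (intro sum_nonneg) simp
  also have "\<dots> = (\<Sum>i<n. \<Sum>j<n. (a i)\<^sup>2 * (b j)\<^sup>2) + (\<Sum>i<n. \<Sum>j<n. (a j)\<^sup>2 * (b i)\<^sup>2)
      - 2 * (\<Sum>i<n. \<Sum>j<n. (a i * b i) * (a j * b j))"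
    unfolding square by (simp only: sum.distrib sum_subtractf sum_distrib_left)
  also have "\<dots> = 2 * ((\<Sum>i<n. (a i)\<^sup>2) * (\<Sum>i<n. (b i)\<^sup>2) - (\<Sum>i<n. a i * b i)\<^sup>2)"
    by (subst (2) sum.swap) (simp add: sum_product power2_eq_square)
  finally show ?thesis by simp
qed

lemma complex_Cauchy_Schwarz:
  fixes x y :: "nat \<Rightarrow> complex"
  shows "(cmod (\<Sum>j<n. x j * y j))\<^sup>2 \<le> (\<Sum>j<n. (cmod (x j))\<^sup>2) * (\<Sum>j<n. (cmod (y j))\<^sup>2)"
proof -
  have "cmod (\<Sum>j<n. x j * y j) \<le> (\<Sum>j<n. cmod (x j) * cmod (y j))"
    by (rule order.trans[OF norm_sum]) (simp add: norm_mult)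
  then have "(cmod (\<Sum>j<n. x j * y j))\<^sup>2 \<le> (\<Sum>j<n. cmod (x j) * cmod (y j))\<^sup>2"
    by (intro power_mono) auto
  also have "\<dots> \<le> (\<Sum>j<n. (cmod (x j))\<^sup>2) * (\<Sum>j<n. (cmod (y j))\<^sup>2)"
    by (rule real_Cauchy_Schwarz)
  finally show ?thesis .
qed

text \<open>Writing \<tau> = B B^* gives v^* \<tau> v = \<Sum>m |(B^* v) m|^2, which Cauchy-Schwarz bounds by
  tr \<tau> |v|^2.\<close>
lemma density_le_identity:
  assumes \<tau>: "density n \<tau>"
  shows "Re (qform n (\<lambda>i j. \<tau> $$ (i,j)) v) \<le> (\<Sum>j<n. (cmod (v j))\<^sup>2)"
proof -
  obtain B where B: "\<forall>i<n. \<forall>j<n. \<tau> $$ (i,j) = (\<Sum>m<n. B i m * cnj (B j m))"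
    using psd_factorization[OF density_psd[OF \<tau>]] by blast
  define g where "g m = (\<Sum>j<n. cnj (B j m) * v j)" for m
  have "qform n (\<lambda>i j. \<tau> $$ (i,j)) v = qform n (\<lambda>i j. \<Sum>m<n. B i m * cnj (B j m)) v"
    using B by (intro qform_cong) simp
  also have "\<dots> = (\<Sum>m<n. qform n (\<lambda>i j. B i m * cnj (B j m)) v)"
    by (rule qform_sum)
  also have "\<dots> = (\<Sum>m<n. cnj (g m) * g m)"
    unfolding qform_def g_def cnj_sum sum_product by (simp add: mult_ac)
  finally have "Re (qform n (\<lambda>i j. \<tau> $$ (i,j)) v) = (\<Sum>m<n. (cmod (g m))\<^sup>2)"
    by (simp add: Re_sum complex_mult_cnj cmod_power2 mult.commute[of "cnj _"])
  also have "\<dots> \<le> (\<Sum>m<n. (\<Sum>j<n. (cmod (B j m))\<^sup>2) * (\<Sum>j<n. (cmod (v j))\<^sup>2))"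
    unfolding g_def using complex_Cauchy_Schwarz[of "\<lambda>j. cnj (B j _)"] by (intro sum_mono) simp
  also have "\<dots> = (\<Sum>j<n. \<Sum>m<n. (cmod (B j m))\<^sup>2) * (\<Sum>j<n. (cmod (v j))\<^sup>2)"
    by (subst sum.swap) (simp add: sum_distrib_right)
  also have "(\<Sum>j<n. \<Sum>m<n. (cmod (B j m))\<^sup>2) = Re (\<Sum>j<n. \<tau> $$ (j,j))"
    using B by (simp add: Re_sum complex_mult_cnj cmod_power2)
  finally show ?thesis using density_trace[OF \<tau>] by simp
qed

definition complement_state :: "nat \<Rightarrow> nat \<Rightarrow> complex mat \<Rightarrow> complex mat" where
  "complement_state dW dS \<tau> = mat dS dS (\<lambda>(s,t).
     (of_nat dW / of_nat dS * (if s = t then 1 else 0) - \<tau> $$ (s,t)) / of_nat (dW - 1))"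

context
  fixes dW dS :: nat and \<tau> :: "complex mat"
  assumes \<tau>: "density dS \<tau>" and dS: "0 < dS" "dS \<le> dW" and dW: "2 \<le> dW"
begin

lemma complement_state_index:
  "s < dS \<Longrightarrow> t < dS \<Longrightarrow> complement_state dW dS \<tau> $$ (s,t) =
     (of_nat dW / of_nat dS * (if s = t then 1 else 0) - \<tau> $$ (s,t)) / of_nat (dW - 1)"
  unfolding complement_state_def by (simp only: index_mat case_prod_conv)

lemma complement_state_add:
  assumes "s < dS" "t < dS"
  shows "\<tau> $$ (s,t) + of_nat (dW - 1) * complement_state dW dS \<tau> $$ (s,t) =
    of_nat dW / of_nat dS * (if s = t then 1 else 0)"
proof -
  have "of_nat (dW - 1) * (z / of_nat (dW - 1)) = (z::complex)" for z
    using dW by simp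
  then show ?thesis using assms by (simp only: complement_state_index) simp
qed

lemma complement_state_density: "density dS (complement_state dW dS \<tau>)"
proof -
  let ?C = "complement_state dW dS \<tau>"
  define c where "c = 1 / real (dW - 1)"
  have c: "0 < c" using dW by (simp add: c_def)
  have C: "?C $$ (s,t) =
      of_real (c * real dW / real dS) * (if s = t then 1 else 0) + of_real (- c) * \<tau> $$ (s,t)"
    if "s < dS" "t < dS" for s t
    using that by (simp add: complement_state_index c_def diff_divide_distrib)
  have herm: "cnj (?C $$ (t,s)) = ?C $$ (s,t)" if "s < dS" "t < dS" for s t
    using that density_psd[OF \<tau>] by (simp add: C psd_def)
  have pos: "0 \<le> Re (qform dS (\<lambda>s t. ?C $$ (s,t)) v)" for v
  proof -
    have "qform dS (\<lambda>s t. ?C $$ (s,t)) v = qform dS (\<lambda>s t. of_real (c * real dW / real dS) *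
        (if s = t then 1 else 0) + of_real (- c) * \<tau> $$ (s,t)) v"
      by (rule qform_cong) (simp add: C)
    then have "Re (qform dS (\<lambda>s t. ?C $$ (s,t)) v)
        = c * real dW / real dS * (\<Sum>s<dS. (cmod (v s))\<^sup>2) - c * Re (qform dS (\<lambda>s t. \<tau> $$ (s,t)) v)"
      unfolding qform_linear qform_identity
      by (simp add: Re_sum complex_mult_cnj cmod_power2 mult.commute[of "cnj _"])
    also have "\<dots> \<ge> c * (\<Sum>s<dS. (cmod (v s))\<^sup>2) - c * (\<Sum>s<dS. (cmod (v s))\<^sup>2)"
    proof (intro diff_mono mult_left_mono density_le_identity[OF \<tau>])
      show "c * (\<Sum>s<dS. (cmod (v s))\<^sup>2) \<le> c * real dW / real dS * (\<Sum>s<dS. (cmod (v s))\<^sup>2)"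
        using c dS by (intro mult_right_mono) (auto simp: field_simps intro: sum_nonneg)
    qed (use c in auto)
    finally show ?thesis by simp
  qed
  have trace: "(\<Sum>s<dS. ?C $$ (s,s)) = 1"
  proof -
    have "(\<Sum>s<dS. ?C $$ (s,s)) =
        (of_nat dS * (of_nat dW / of_nat dS) - (\<Sum>s<dS. \<tau> $$ (s,s))) / of_nat (dW - 1)"
      by (simp add: complement_state_index sum_subtractf flip: sum_divide_distrib)
    also have "\<dots> = (of_nat dW - 1) / of_nat (dW - 1)"
      using dS by (simp add: density_trace[OF \<tau>])
    also have "\<dots> = 1"
      using dW by (simp add: of_nat_diff)
    finally show ?thesis .
  qed
  show ?thesis
    unfolding density_iff_psd psd_def using herm pos trace by (auto simp: complement_state_def)
qed

end

section \<open>Measure-and-prepare channels\<close>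

text \<open>Measure in the computational basis and, on outcome a, prepare the state
  \<Sum>j |\<phi> a j\<rangle>\<langle>\<phi> a j|; the Kraus operators are |\<phi> a j\<rangle>\<langle>a|.\<close>
definition prepare_op :: "nat \<Rightarrow> (nat \<Rightarrow> nat \<Rightarrow> nat \<Rightarrow> complex) \<Rightarrow> nat \<Rightarrow> nat \<Rightarrow> complex mat" where
  "prepare_op N \<phi> a j = mat N N (\<lambda>(x,c). if c = a then \<phi> a j x else 0)"

definition prepare_channel :: "nat \<Rightarrow> nat \<Rightarrow>
    (nat \<Rightarrow> nat \<Rightarrow> nat \<Rightarrow> complex) \<Rightarrow> complex mat \<Rightarrow> complex mat" where
  "prepare_channel N M \<phi> = kraus_apply (kraus_family N M (prepare_op N \<phi>))"

context
  fixes N M :: nat and \<phi> :: "nat \<Rightarrow> nat \<Rightarrow> nat \<Rightarrow> complex"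
  assumes prepared_trace: "\<And>a. a < N \<Longrightarrow> (\<Sum>x<N. \<Sum>j<M. \<phi> a j x * cnj (\<phi> a j x)) = 1"
    and prepared_sum: "\<And>x y. x < N \<Longrightarrow> y < N \<Longrightarrow>
      (\<Sum>a<N. \<Sum>j<M. \<phi> a j x * cnj (\<phi> a j y)) = (if x = y then 1 else 0)"
begin

lemma prepare_kraus_tp: "kraus_tp N (kraus_family N M (prepare_op N \<phi>))"
  unfolding kraus_tp_family_iff
proof (intro allI impI)
  fix c d assume cd: "c < N" "d < N"
  have "(\<Sum>a<N. \<Sum>j<M. \<Sum>x<N. cnj (prepare_op N \<phi> a j $$ (x,d)) * prepare_op N \<phi> a j $$ (x,c))
      = (\<Sum>a<N. if a = d then (if c = d then \<Sum>x<N. \<Sum>j<M. \<phi> d j x * cnj (\<phi> d j x) else 0) else 0)"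
    using cd by (intro sum.cong refl) (auto simp: prepare_op_def if_distrib[of cnj] if_zero_mult_if_zero
        mult.commute sum_if_const_cond cong: if_cong intro: sum.swap)
  then show "(\<Sum>a<N. \<Sum>j<M. \<Sum>x<N. cnj (prepare_op N \<phi> a j $$ (x,d)) * prepare_op N \<phi> a j $$ (x,c))
      = (if d = c then 1 else 0)"
    using cd prepared_trace by auto
qed

lemma prepare_kraus_unital: "kraus_unital N (kraus_family N M (prepare_op N \<phi>))"
  unfolding kraus_unital_family_iff
proof (intro allI impI)
  fix x y assume xy: "x < N" "y < N"
  have "(\<Sum>a<N. \<Sum>j<M. \<Sum>z<N. prepare_op N \<phi> a j $$ (x,z) * cnj (prepare_op N \<phi> a j $$ (y,z)))
      = (\<Sum>a<N. \<Sum>j<M. \<phi> a j x * cnj (\<phi> a j y))"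
    using xy by (intro sum.cong refl) (simp add: prepare_op_def if_distrib[of cnj] if_zero_mult_if_zero
        cong: if_cong)
  then show "(\<Sum>a<N. \<Sum>j<M. \<Sum>z<N. prepare_op N \<phi> a j $$ (x,z) * cnj (prepare_op N \<phi> a j $$ (y,z)))
      = (if x = y then 1 else 0)"
    using xy prepared_sum by simp
qed

lemma unital_cptp_prepare_channel: "0 < N \<Longrightarrow> 0 < M \<Longrightarrow> unital_cptp N (prepare_channel N M \<phi>)"
  unfolding prepare_channel_def
  by (intro unital_cptpI kraus_family_carrier kraus_family_nonempty prepare_kraus_tp
      prepare_kraus_unital)
    (auto simp: prepare_op_def)

lemma prepare_channel_density: "density N \<sigma> \<Longrightarrow> density N (prepare_channel N M \<phi> \<sigma>)"
  unfolding prepare_channel_def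
  by (intro kraus_apply_density kraus_family_carrier prepare_kraus_tp) (auto simp: prepare_op_def)

lemma prepare_channel_index:
  assumes \<sigma>: "\<sigma> \<in> carrier_mat N N" and xy: "x < N" "y < N"
  shows "prepare_channel N M \<phi> \<sigma> $$ (x,y) = (\<Sum>a<N. \<sigma> $$ (a,a) * (\<Sum>j<M. \<phi> a j x * cnj (\<phi> a j y)))"
proof -
  have "(\<Sum>c<N. \<Sum>d<N. prepare_op N \<phi> a j $$ (x,c) * \<sigma> $$ (c,d) * cnj (prepare_op N \<phi> a j $$ (y,d)))
      = \<sigma> $$ (a,a) * (\<phi> a j x * cnj (\<phi> a j y))" if "a < N" for a j
    using xy that by (simp add: prepare_op_def if_distrib[of cnj] if_zero_mult_if_zero
        if_distrib[of "\<lambda>z. _ * z"] mult_ac sum_if_const_cond cong: if_cong)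
  then show ?thesis
    unfolding prepare_channel_def using xy
    by (simp add: kraus_apply_family_index[OF _ \<sigma>] prepare_op_def sum_distrib_left)
qed

end

text \<open>Preparation vectors |w\<rangle> \<otimes> F_(a div dS) e_m / sqrt dW, indexed by j = w dS + m: on
  outcome a the channel prepares (1/dW) 1_W \<otimes> F_i F_i^* with i = a div dS.\<close>
definition product_prep :: "nat \<Rightarrow> nat \<Rightarrow> (nat \<Rightarrow> nat \<Rightarrow> nat \<Rightarrow> complex) \<Rightarrow> nat \<Rightarrow> nat \<Rightarrow> nat \<Rightarrow> complex" where
  "product_prep dW dS F a j x =
     (if x div dS = j div dS then F (a div dS) (x mod dS) (j mod dS) / of_real (sqrt (real dW)) else 0)"

lemma product_prep_state:
  assumes dS: "0 < dS" and xy: "x < dW*dS" "y < dW*dS"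
  shows "(\<Sum>j<dW*dS. product_prep dW dS F a j x * cnj (product_prep dW dS F a j y)) =
    (if x div dS = y div dS
     then (\<Sum>m<dS. F (a div dS) (x mod dS) m * cnj (F (a div dS) (y mod dS) m)) / of_nat dW else 0)"
proof -
  let ?G = "\<lambda>m. F (a div dS) (x mod dS) m * cnj (F (a div dS) (y mod dS) m) / of_nat dW"
  have "of_real (sqrt (real dW)) * of_real (sqrt (real dW)) = (of_nat dW :: complex)"
    by (simp flip: of_real_mult)
  then have "product_prep dW dS F a (w*dS+m) x * cnj (product_prep dW dS F a (w*dS+m) y) =
      (if w = x div dS \<and> w = y div dS then ?G m else 0)" if "m < dS" for w m
    using that by (auto simp: product_prep_def)
  then have "(\<Sum>j<dW*dS. product_prep dW dS F a j x * cnj (product_prep dW dS F a j y))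
      = (\<Sum>w<dW. if w = x div dS \<and> w = y div dS then (\<Sum>m<dS. ?G m) else 0)"
    by (simp add: sum_lessThan_mult sum_if_const_cond)
  also have "\<dots> = (if x div dS = y div dS then (\<Sum>m<dS. ?G m) else 0)"
    using xy by (auto simp: less_mult_imp_div_less mult.commute intro!: sum.neutral)
  finally show ?thesis by (simp add: sum_divide_distrib)
qed


abbreviation product_prep_channel ::
    "nat \<Rightarrow> nat \<Rightarrow> (nat \<Rightarrow> nat \<Rightarrow> nat \<Rightarrow> complex) \<Rightarrow> complex mat \<Rightarrow> complex mat" where
  "product_prep_channel dW dS F \<equiv> prepare_channel (dW*dS) (dW*dS) (product_prep dW dS F)"

context
  fixes dW dS :: nat and H :: "nat \<Rightarrow> complex mat" and F :: "nat \<Rightarrow> nat \<Rightarrow> nat \<Rightarrow> complex"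
  assumes dW: "0 < dW" and dS: "0 < dS"
    and H_factor: "\<forall>i<dW. \<forall>s<dS. \<forall>t<dS. H i $$ (s,t) = (\<Sum>m<dS. F i s m * cnj (F i t m))"
    and H_trace: "\<forall>i<dW. (\<Sum>s<dS. H i $$ (s,s)) = 1"
    and H_sum: "\<forall>s<dS. \<forall>t<dS. (\<Sum>i<dW. H i $$ (s,t)) = of_nat dW / of_nat dS * (if s = t then 1 else 0)"
begin

lemma product_prep_state_H:
  "x < dW*dS \<Longrightarrow> y < dW*dS \<Longrightarrow> a < dW*dS \<Longrightarrow>
   (\<Sum>j<dW*dS. product_prep dW dS F a j x * cnj (product_prep dW dS F a j y)) =
     (if x div dS = y div dS then H (a div dS) $$ (x mod dS, y mod dS) / of_nat dW else 0)"
  using dS by (simp add: product_prep_state[OF dS] H_factor less_mult_imp_div_less)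

lemma product_prep_trace:
  assumes a: "a < dW*dS"
  shows "(\<Sum>x<dW*dS. \<Sum>j<dW*dS. product_prep dW dS F a j x * cnj (product_prep dW dS F a j x)) = 1"
proof -
  have "(\<Sum>x<dW*dS. \<Sum>j<dW*dS. product_prep dW dS F a j x * cnj (product_prep dW dS F a j x))
      = (\<Sum>x<dW*dS. H (a div dS) $$ (x mod dS, x mod dS) / of_nat dW)"
    using a by (simp add: product_prep_state_H)
  also have "\<dots> = of_nat dW * ((\<Sum>s<dS. H (a div dS) $$ (s,s)) / of_nat dW)"
    by (simp add: sum_lessThan_mult flip: sum_divide_distrib)
  also have "\<dots> = 1"
    using a dW by (simp add: H_trace less_mult_imp_div_less)
  finally show ?thesis .
qed

lemma product_prep_sum:
  assumes "x < dW*dS" "y < dW*dS"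
  shows "(\<Sum>a<dW*dS. \<Sum>j<dW*dS. product_prep dW dS F a j x * cnj (product_prep dW dS F a j y)) =
    (if x = y then 1 else 0)"
proof -
  have "(\<Sum>a<dW*dS. H (a div dS) $$ (x mod dS, y mod dS))
      = of_nat dS * (\<Sum>i<dW. H i $$ (x mod dS, y mod dS))"
    by (simp add: sum_lessThan_mult sum_distrib_left)
  also have "\<dots> = of_nat dW * (if x mod dS = y mod dS then 1 else 0)"
    using dS by (simp add: H_sum)
  finally have sum_H: "(\<Sum>a<dW*dS. H (a div dS) $$ (x mod dS, y mod dS)) =
      of_nat dW * (if x mod dS = y mod dS then 1 else 0)" .
  have "(\<Sum>a<dW*dS. \<Sum>j<dW*dS. product_prep dW dS F a j x * cnj (product_prep dW dS F a j y))
      = (if x div dS = y div dS then (\<Sum>a<dW*dS. H (a div dS) $$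
          (x mod dS, y mod dS)) / of_nat dW else 0)"
    using assms by (simp add: product_prep_state_H sum_if_const_cond flip: sum_divide_distrib)
  also have "\<dots> = (if x div dS = y div dS \<and> x mod dS = y mod dS then 1 else 0)"
    unfolding sum_H using dW by simp
  finally show ?thesis by (simp only: div_mod_eq_iff_eq)
qed

lemma unital_cptp_product_prep_channel: "unital_cptp (dW*dS) (product_prep_channel dW dS F)"
  using dW dS product_prep_trace product_prep_sum by (intro unital_cptp_prepare_channel) auto

lemma product_prep_channel_Omega: "\<sigma> \<in> Omega dW dS \<Longrightarrow> product_prep_channel dW dS F \<sigma> \<in> Omega dW dS"
  unfolding Omega_def using product_prep_trace product_prep_sum
  by (auto intro: prepare_channel_density)

lemma ptrace_W_product_prep_channel:
  assumes \<sigma>: "\<sigma> \<in> carrier_mat (dW*dS) (dW*dS)" and st: "s < dS" "t < dS"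
  shows "ptrace_W dW dS (product_prep_channel dW dS F \<sigma>) $$ (s,t)
      = (\<Sum>i<dW. ptrace_S dW dS \<sigma> $$ (i,i) * H i $$ (s,t))"
proof -
  have "ptrace_W dW dS (product_prep_channel dW dS F \<sigma>) $$ (s,t)
      = (\<Sum>w<dW. \<Sum>a<dW*dS. \<sigma> $$ (a,a) * (H (a div dS) $$ (s,t) / of_nat dW))"
    using st mult_index_less[of _ dW s dS] mult_index_less[of _ dW t dS]
    by (simp add: ptrace_W_index prepare_channel_index[OF product_prep_trace product_prep_sum \<sigma>]
        product_prep_state_H)
  also have "\<dots> = (\<Sum>a<dW*dS. \<sigma> $$ (a,a) * H (a div dS) $$ (s,t))"
    using dW by (simp flip: sum_divide_distrib)
  also have "\<dots> = (\<Sum>i<dW. ptrace_S dW dS \<sigma> $$ (i,i) * H i $$ (s,t))"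
    by (simp add: sum_lessThan_mult ptrace_S_index sum_distrib_right)
  finally show ?thesis .
qed

end

lemma density_family_factorization:
  assumes "\<And>i. i < N \<Longrightarrow> density n (H i)"
  shows "\<exists>F. \<forall>i<N. \<forall>s<n. \<forall>t<n. H i $$ (s,t) = (\<Sum>m<n. F i s m * cnj (F i t m))"
proof -
  have "\<forall>i. \<exists>B. i < N \<longrightarrow> (\<forall>s<n. \<forall>t<n. H i $$ (s,t) = (\<Sum>m<n. B s m * cnj (B t m)))"
    using psd_factorization[OF density_psd[OF assms]] by blast
  then show ?thesis by (metis choice)
qed

definition target_resolution :: "nat \<Rightarrow> nat \<Rightarrow> complex mat \<Rightarrow> nat \<Rightarrow> complex mat" where
  "target_resolution dW dS \<tau> i = (if i = 0 then \<tau> else complement_state dW dS \<tau>)"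

context
  fixes dW dS :: nat and \<tau> :: "complex mat"
  assumes dS: "0 < dS" "dS \<le> dW" and \<tau>: "density dS \<tau>"
begin

lemma target_resolution_density: "i < dW \<Longrightarrow> density dS (target_resolution dW dS \<tau> i)"
  using complement_state_density[OF \<tau> dS] \<tau> by (cases "i = 0") (simp_all add: target_resolution_def)

lemma target_resolution_sum:
  assumes st: "s < dS" "t < dS"
  shows "(\<Sum>i<dW. target_resolution dW dS \<tau> i $$ (s,t)) =
      of_nat dW / of_nat dS * (if s = t then 1 else 0)"
proof (cases "dW = 1")
  case True
  then have "dS = 1" "s = 0" "t = 0" using dS st by auto
  then show ?thesis using True density_trace[OF \<tau>] by (simp add: target_resolution_def)
next
  case False
  have "(\<Sum>i<dW. target_resolution dW dS \<tau> i $$ (s,t))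
      = target_resolution dW dS \<tau> 0 $$ (s,t) + (\<Sum>i\<in>{..<dW} - {0}. target_resolution dW dS \<tau> i $$ (s,t))"
    using dS by (intro sum.remove) auto
  also have "\<dots> = \<tau> $$ (s,t) + of_nat (dW - 1) * complement_state dW dS \<tau> $$ (s,t)"
    using dS by (simp add: target_resolution_def)
  finally show ?thesis using False dS complement_state_add[OF \<tau> dS _ st] by simp
qed

lemma currency_set_one_reaches_marginal:
  "\<exists>E. unital_cptp (dW*dS) E \<and>
    (\<forall>\<sigma>\<in>currency_set dW dS 1. E \<sigma> \<in> Omega dW dS \<and> ptrace_W dW dS (E \<sigma>) = \<tau>)"
proof -
  have dW: "0 < dW" using dS by simp
  let ?H = "target_resolution dW dS \<tau>"
  obtain F where F: "\<forall>i<dW. \<forall>s<dS. \<forall>t<dS. ?H i $$ (s,t) = (\<Sum>m<dS. F i s m * cnj (F i t m))"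
    using density_family_factorization target_resolution_density by blast
  have H_trace: "\<forall>i<dW. (\<Sum>s<dS. ?H i $$ (s,s)) = 1"
    using density_trace[OF target_resolution_density] by blast
  have H_sum: "\<forall>s<dS. \<forall>t<dS. (\<Sum>i<dW. ?H i $$ (s,t)) = of_nat dW / of_nat dS * (if s = t then 1 else 0)"
    using target_resolution_sum by blast
  note channel = unital_cptp_product_prep_channel[OF dW dS(1) F H_trace H_sum]
    product_prep_channel_Omega[OF dW dS(1) F H_trace H_sum]
    ptrace_W_product_prep_channel[OF dW dS(1) F H_trace H_sum]
  have "ptrace_W dW dS (product_prep_channel dW dS F \<sigma>) = \<tau>" if \<sigma>: "\<sigma> \<in> currency_set dW dS 1" for \<sigma>
  proof (rule eq_matI)
    have \<sigma>_carrier: "\<sigma> \<in> carrier_mat (dW*dS) (dW*dS)" and \<sigma>_W: "ptrace_S dW dS \<sigma> = proj_norm dW 1"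
      using \<sigma> by (auto simp: currency_set_def Omega_def density_carrier)
    fix s t assume "s < dim_row \<tau>" "t < dim_col \<tau>"
    then have st: "s < dS" "t < dS" using density_carrier[OF \<tau>] by auto
    have "ptrace_W dW dS (product_prep_channel dW dS F \<sigma>) $$ (s,t)
        = (\<Sum>i<dW. ptrace_S dW dS \<sigma> $$ (i,i) * ?H i $$ (s,t))"
      using channel(3)[OF \<sigma>_carrier st] .
    also have "\<dots> = (\<Sum>i<dW. if i = 0 then \<tau> $$ (s,t) else 0)"
      using \<sigma>_W by (intro sum.cong refl) (simp add: proj_norm_def target_resolution_def)
    finally show "ptrace_W dW dS (product_prep_channel dW dS F \<sigma>) $$ (s,t) = \<tau> $$ (s,t)"
      using dW by simp
  qed (use density_carrier[OF \<tau>] in \<open>auto simp: ptrace_W_def\<close>)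
  then show ?thesis
    using channel(1,2) unfolding currency_set_def by blast
qed

end

section \<open>The currency\<close>

definition marginal_spec :: "nat \<Rightarrow> nat \<Rightarrow> complex mat set \<Rightarrow> complex mat set" where
  "marginal_spec dW dS VS = {\<sigma> \<in> Omega dW dS. ptrace_W dW dS \<sigma> \<in> VS}"

lemma target_family_iff:
  "V \<in> target_family dW dS \<longleftrightarrow> (\<exists>VS. V = marginal_spec dW dS VS \<and> VS \<noteq> {} \<and> (\<forall>\<tau>\<in>VS. density dS \<tau>))"
  unfolding target_family_def marginal_spec_def by blast

lemma Omega_eq_marginal_spec: "0 < dS \<Longrightarrow> Omega dW dS = marginal_spec dW dS {\<tau>. density dS \<tau>}"
  unfolding marginal_spec_def Omega_def using ptrace_W_density by blast

lemma currency_set_subset_Omega: "currency_set dW dS k \<subseteq> Omega dW dS"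
  unfolding currency_set_def by blast

lemma tensor_state_in_currency_set_marginal_spec:
  "1 \<le> k \<Longrightarrow> k \<le> dW \<Longrightarrow> \<tau> \<in> VS \<Longrightarrow> density dS \<tau> \<Longrightarrow>
   tensor_state dW dS k \<tau> \<in> currency_set dW dS k \<inter> marginal_spec dW dS VS"
  using tensor_state_in_currency_set ptrace_W_tensor_state currency_set_subset_Omega
  unfolding marginal_spec_def by fastforce

lemma reach_currency_set_within_marginal_spec:
  assumes k: "1 \<le> k" "k \<le> dW" and dS: "0 < dS" and X: "X \<subseteq> Omega dW dS"
    and support: "\<And>\<sigma> i. \<sigma> \<in> X \<Longrightarrow> k \<le> i \<Longrightarrow> i < dW \<Longrightarrow> ptrace_S dW dS \<sigma> $$ (i,i) = 0"
  shows "reach dW dS (X \<inter> marginal_spec dW dS VS) (currency_set dW dS k \<inter> marginal_spec dW dS VS)"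
proof -
  let ?E = "transition_channel dW dS (level_mixing k)"
  have p: "doubly_stochastic dW (level_mixing k)" using k by (rule doubly_stochastic_level_mixing)
  have "?E \<sigma> \<in> currency_set dW dS k \<inter> marginal_spec dW dS VS" if "\<sigma> \<in> X \<inter> marginal_spec dW dS VS" for \<sigma>
  proof -
    have \<sigma>: "\<sigma> \<in> Omega dW dS" using that X by blast
    have "?E \<sigma> \<in> currency_set dW dS k"
      using level_mixing_into_currency_set[OF k dS \<sigma>] support that by blast
    moreover have "ptrace_W dW dS (?E \<sigma>) = ptrace_W dW dS \<sigma>"
      using \<sigma> k dS p by (intro ptrace_W_transition_channel) (auto simp: Omega_def density_carrier)
    ultimately show ?thesis
      using that currency_set_subset_Omega[of dW dS k] unfolding marginal_spec_def by auto
  qed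
  moreover have "unital_cptp (dW*dS) ?E"
    using k dS p by (intro unital_cptp_transition_channel) auto
  ultimately show ?thesis unfolding reach_def by blast
qed

lemma marginal_spec_UNIV: "marginal_spec dW dS UNIV = Omega dW dS"
  unfolding marginal_spec_def by blast

lemma reach_currency_set:
  assumes "1 \<le> k" "k \<le> dW" "0 < dS" "X \<subseteq> Omega dW dS"
    and "\<And>\<sigma> i. \<sigma> \<in> X \<Longrightarrow> k \<le> i \<Longrightarrow> i < dW \<Longrightarrow> ptrace_S dW dS \<sigma> $$ (i,i) = 0"
  shows "reach dW dS X (currency_set dW dS k)"
  using reach_currency_set_within_marginal_spec[OF assms, of UNIV] assms(4)
      currency_set_subset_Omega[of dW dS k]
  by (simp add: marginal_spec_UNIV Int_absorb2)

lemma not_reach_currency_set_down: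
  assumes dS: "0 < dS" and k: "1 \<le> k'" "k' < k" "k \<le> dW"
  shows "\<not> reach dW dS (currency_set dW dS k) (currency_set dW dS k')"
proof
  assume "reach dW dS (currency_set dW dS k) (currency_set dW dS k')"
  then obtain E where E: "unital_cptp (dW*dS) E" "\<forall>\<rho>\<in>currency_set dW dS k. E \<rho> \<in> currency_set dW dS k'"
    unfolding reach_def by blast
  obtain Ks where Ks: "\<forall>K\<in>set Ks. K \<in> carrier_mat (dW*dS) (dW*dS)" "kraus_unital (dW*dS) Ks"
    "\<And>\<rho>. \<rho> \<in> carrier_mat (dW*dS) (dW*dS) \<Longrightarrow> E \<rho> = kraus_apply Ks \<rho>"
    using E(1) by (metis unital_cptpE)
  define \<rho> where "\<rho> = tensor_state dW dS k (maximally_mixed dS)"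
  have \<rho>_in: "\<rho> \<in> currency_set dW dS k"
    unfolding \<rho>_def using k maximally_mixed_density[OF dS] by (intro tensor_state_in_currency_set) auto
  have \<rho>_carrier: "\<rho> \<in> carrier_mat (dW*dS) (dW*dS)" unfolding \<rho>_def tensor_state_def by simp
  have \<rho>_diag: "\<rho> $$ (c,d) = 0" if "c < dW*dS" "d < dW*dS" "c \<noteq> d" for c d
  proof -
    have "c div dS \<noteq> d div dS \<or> c mod dS \<noteq> d mod dS" using \<open>c \<noteq> d\<close> by (metis div_mult_mod_eq)
    then show ?thesis using that dS unfolding \<rho>_def tensor_state_def maximally_mixed_def by auto
  qed
  define l where "l = 1 / (real k * real dS)"
  have \<rho>_bound: "Re (\<rho> $$ (c,c)) \<le> l" if "c < dW*dS" for c
    using that dS unfolding \<rho>_def tensor_state_def maximally_mixed_def l_def by (simp add: mult.commute)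
  define \<sigma> where "\<sigma> = kraus_apply Ks \<rho>"
  have \<sigma>_bound: "Re (\<sigma> $$ (x,x)) \<le> l" if "x < dW*dS" for x
    unfolding \<sigma>_def using Ks(1,2) \<rho>_carrier \<rho>_diag \<rho>_bound that by (rule kraus_apply_diag_le)
  have "ptrace_S dW dS \<sigma> = proj_norm dW k'"
    using E(2) \<rho>_in Ks(3)[OF \<rho>_carrier] unfolding \<sigma>_def currency_set_def by auto
  then have "(\<Sum>i<k'. ptrace_S dW dS \<sigma> $$ (i,i)) = 1"
    using k by (simp add: proj_norm_def)
  then have "1 = (\<Sum>i<k'. \<Sum>s<dS. Re (\<sigma> $$ (i*dS+s, i*dS+s)))"
    using k by (simp add: ptrace_S_index flip: Re_sum)
  also have "\<dots> \<le> (\<Sum>i<k'. \<Sum>s<dS. l)"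
    using k mult_index_less[of _ dW _ dS] by (intro sum_mono \<sigma>_bound) auto
  also have "\<dots> = real k' / real k" unfolding l_def using dS by simp
  also have "\<dots> < 1" using k by simp
  finally show False by simp
qed

lemma reach_subset_left: "X \<subseteq> X' \<Longrightarrow> reach dW dS X' Y \<Longrightarrow> reach dW dS X Y"
  unfolding reach_def by blast

lemma proj_norm_diag_beyond: "k \<le> i \<Longrightarrow> i < dW \<Longrightarrow> proj_norm dW k $$ (i,i) = 0"
  by (simp add: proj_norm_def)

lemma currency_set_support:
  "\<sigma> \<in> currency_set dW dS k \<Longrightarrow> k \<le> k' \<Longrightarrow> k' \<le> i \<Longrightarrow> i < dW \<Longrightarrow> ptrace_S dW dS \<sigma> $$ (i,i) = 0"
  unfolding currency_set_def by (simp add: proj_norm_diag_beyond)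

lemma reach_currency_set_iff:
  assumes dS: "0 < dS" and k: "k \<in> {1..dW}" "k' \<in> {1..dW}"
  shows "reach dW dS (currency_set dW dS k) (currency_set dW dS k') \<longleftrightarrow> k \<le> k'"
proof
  assume "reach dW dS (currency_set dW dS k) (currency_set dW dS k')"
  then show "k \<le> k'" using not_reach_currency_set_down[OF dS, of k' k] k by force
next
  assume "k \<le> k'"
  then show "reach dW dS (currency_set dW dS k) (currency_set dW dS k')"
    using k dS currency_set_subset_Omega currency_set_support by (intro reach_currency_set) auto
qed

lemma reach_Omega_currency_set_iff:
  assumes dS: "0 < dS" and k: "k \<in> {1..dW}"
  shows "reach dW dS (Omega dW dS) (currency_set dW dS k) \<longleftrightarrow> k = dW"
proof
  assume "reach dW dS (Omega dW dS) (currency_set dW dS k)"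
  then have "reach dW dS (currency_set dW dS dW) (currency_set dW dS k)"
    by (rule reach_subset_left[OF currency_set_subset_Omega])
  then show "k = dW" using reach_currency_set_iff[OF dS _ k, of dW] k by auto
next
  assume "k = dW"
  then show "reach dW dS (Omega dW dS) (currency_set dW dS k)"
    using k dS by (intro reach_currency_set) auto
qed

lemma reach_Omega: "X \<subseteq> Omega dW dS \<Longrightarrow> reach dW dS X (Omega dW dS)"
  by (rule reach_subset) auto

lemma currency_family_cases:
  assumes "X \<in> currency_family dW dS"
  obtains "X = Omega dW dS" | k where "k \<in> {1..dW}" "X = currency_set dW dS k"
  using assms unfolding currency_family_def by blast

lemma currency_family_subset_Omega: "X \<in> currency_family dW dS \<Longrightarrow> X \<subseteq> Omega dW dS"
  by (erule currency_family_cases) (auto simp: currency_set_subset_Omega)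

definition currency_level :: "nat \<Rightarrow> nat \<Rightarrow> complex mat set \<Rightarrow> nat" where
  "currency_level dW dS X = (LEAST k. 1 \<le> k \<and> k \<le> dW \<and> reach dW dS X (currency_set dW dS k))"

context
  fixes dW dS :: nat
  assumes dS: "0 < dS" and dW: "1 \<le> dW"
begin

lemma currency_level_currency_set: "k \<in> {1..dW} \<Longrightarrow> currency_level dW dS (currency_set dW dS k) = k"
  unfolding currency_level_def
  by (rule Least_equality) (auto simp: reach_currency_set_iff[OF dS])

lemma currency_level_Omega: "currency_level dW dS (Omega dW dS) = dW"
  unfolding currency_level_def
  by (rule Least_equality) (use dW in \<open>auto simp: reach_Omega_currency_set_iff[OF dS]\<close>)

lemma currency_level_range: "X \<in> currency_family dW dS \<Longrightarrow> currency_level dW dS X \<in> {1..dW}"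
  by (erule currency_family_cases)
    (use dW in \<open>auto simp: currency_level_Omega currency_level_currency_set\<close>)

lemma reach_iff_currency_level_le:
  assumes X: "X \<in> currency_family dW dS" and Y: "Y \<in> currency_family dW dS"
  shows "reach dW dS X Y \<longleftrightarrow> currency_level dW dS X \<le> currency_level dW dS Y"
  using Y
proof (cases rule: currency_family_cases)
  case 1
  then show ?thesis
    using currency_level_range[OF X] reach_Omega[OF currency_family_subset_Omega[OF X]]
    by (simp add: currency_level_Omega)
next
  case (2 k')
  from X show ?thesis
  proof (cases rule: currency_family_cases)
    case 1
    then show ?thesis using 2 by (auto simp: reach_Omega_currency_set_iff[OF dS] currency_level_Omega
        currency_level_currency_set)
  next
    case (2 k)
    then show ?thesis using \<open>k' \<in> {1..dW}\<close> \<open>Y = currency_set dW dS k'\<close>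
      by (simp add: reach_currency_set_iff[OF dS] currency_level_currency_set)
  qed
qed

end

definition currency_value :: "nat \<Rightarrow> nat \<Rightarrow> complex mat set \<Rightarrow> real" where
  "currency_value dW dS X = log 2 (real dW) - log 2 (real (currency_level dW dS X))"

context
  fixes dW dS :: nat
  assumes dS: "0 < dS" "dS \<le> dW"
begin

lemma tensor_state_in_currency_family:
  assumes X: "X \<in> currency_family dW dS" and \<tau>: "\<tau> \<in> VS" "density dS \<tau>"
  shows "tensor_state dW dS (currency_level dW dS X) \<tau> \<in> X \<inter> marginal_spec dW dS VS"
  using X
proof (cases rule: currency_family_cases)
  case 1
  then show ?thesis
    using dS \<tau> tensor_state_in_currency_set_marginal_spec[of dW dW]
      currency_set_subset_Omega[of dW dS dW]
    by (auto simp: currency_level_Omega)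
next
  case (2 k)
  then show ?thesis
    using dS \<tau> tensor_state_in_currency_set_marginal_spec[of k dW]
    by (simp add: currency_level_currency_set)
qed

lemma currency_family_support:
  assumes X: "X \<in> currency_family dW dS" and level: "currency_level dW dS X \<le> k'"
    and \<sigma>: "\<sigma> \<in> X" and i: "k' \<le> i" "i < dW"
  shows "ptrace_S dW dS \<sigma> $$ (i,i) = 0"
  using X
proof (cases rule: currency_family_cases)
  case 1
  then show ?thesis using level i dS by (simp add: currency_level_Omega)
next
  case (2 k)
  then show ?thesis
    using level \<sigma> i dS by (simp add: currency_level_currency_set currency_set_support)
qed

lemma target_family_is_spec:
  assumes "V \<in> target_family dW dS"
  shows "is_spec dW dS V"
proof -
  obtain VS \<tau> where V: "V = marginal_spec dW dS VS" and \<tau>: "\<tau> \<in> VS" "density dS \<tau>"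
    using assms unfolding target_family_iff by blast
  then have "tensor_state dW dS 1 \<tau> \<in> V"
    using tensor_state_in_currency_set_marginal_spec[of 1 dW \<tau> VS dS] dS by auto
  then show ?thesis unfolding is_spec_def V marginal_spec_def by blast
qed

lemma reach_target_family:
  assumes "V \<in> target_family dW dS"
  shows "reach dW dS (currency_set dW dS 1) V"
proof -
  obtain VS \<tau> where V: "V = marginal_spec dW dS VS" and \<tau>: "\<tau> \<in> VS" "density dS \<tau>"
    using assms unfolding target_family_iff by blast
  obtain E where "unital_cptp (dW*dS) E"
      "\<forall>\<sigma>\<in>currency_set dW dS 1. E \<sigma> \<in> Omega dW dS \<and> ptrace_W dW dS (E \<sigma>) = \<tau>"
    using currency_set_one_reaches_marginal[OF dS \<tau>(2)] by blast
  then show ?thesis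
    unfolding reach_def V marginal_spec_def using \<tau>(1) by auto
qed

lemma currency_family_is_currency: "is_currency dW dS (currency_family dW dS) (target_family dW dS)"
proof -
  have mixed: "density dS (maximally_mixed dS)" using maximally_mixed_density[OF dS(1)] .
  have "is_spec dW dS X" if "X \<in> currency_family dW dS" for X
    using tensor_state_in_currency_family[OF that _ mixed, of UNIV] currency_family_subset_Omega[OF that]
    unfolding is_spec_def by blast
  moreover have "reach dW dS V (Omega dW dS)" if "V \<in> target_family dW dS" for V
    using that target_family_is_spec reach_Omega unfolding is_spec_def by blast
  moreover have "Omega dW dS \<in> target_family dW dS"
    unfolding target_family_iff using Omega_eq_marginal_spec[OF dS(1)] mixed by blast
  moreover have "currency_set dW dS 1 \<in> currency_family dW dS" "Omega dW dS \<in> currency_family dW dS"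
    using dS unfolding currency_family_def by auto
  moreover have "reach dW dS X Y \<or> reach dW dS Y X"
    if "X \<in> currency_family dW dS" "Y \<in> currency_family dW dS" for X Y
    using that dS by (auto simp: reach_iff_currency_level_le)
  ultimately show ?thesis
    unfolding is_currency_def using target_family_is_spec reach_target_family by metis
qed

lemma currency_value_is_value_function:
  "is_value_function dW dS (currency_family dW dS) (currency_value dW dS)"
proof -
  have levels: "currency_level dW dS X \<in> {1..dW}" if "X \<in> currency_family dW dS" for X
    using that dS currency_level_range by auto
  have "currency_value dW dS Y \<ge> currency_value dW dS X \<longleftrightarrow> reach dW dS Y X"
    if "X \<in> currency_family dW dS" "Y \<in> currency_family dW dS" for X Y
    using that levels[OF that(1)] levels[OF that(2)] dS
    by (simp add: currency_value_def reach_iff_currency_level_le)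
  moreover have "0 \<le> currency_value dW dS X" if "X \<in> currency_family dW dS" for X
    using levels[OF that] by (simp add: currency_value_def)
  ultimately show ?thesis
    using dS unfolding is_value_function_def by (simp add: currency_value_def currency_level_Omega)
qed

lemma currency_value_currency_set:
  "k \<in> {1..dW} \<Longrightarrow> currency_value dW dS (currency_set dW dS k) = log 2 (real dW) - log 2 (real k)"
  using dS by (simp add: currency_value_def currency_level_currency_set)

lemma currency_value_Omega: "currency_value dW dS (Omega dW dS) = 0"
  using dS by (simp add: currency_value_def currency_level_Omega)

lemma currency_family_independent: "is_independent dW dS (currency_family dW dS) (target_family dW dS)"
proof -
  have "X \<inter> V \<noteq> {}" if "X \<in> currency_family dW dS" "V \<in> target_family dW dS" for X V
    using that tensor_state_in_currency_family unfolding target_family_iff by blast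
  moreover have "reach dW dS (X \<inter> V) (Y \<inter> V)"
    if X: "X \<in> currency_family dW dS" and Y: "Y \<in> currency_family dW dS" and XY: "reach dW dS X Y"
      and V: "V \<in> target_family dW dS" for X Y V
  proof -
    obtain VS where V: "V = marginal_spec dW dS VS" using V unfolding target_family_iff by blast
    from Y show ?thesis
    proof (cases rule: currency_family_cases)
      case 1
      then show ?thesis using currency_family_subset_Omega[OF X] by (intro reach_subset) auto
    next
      case (2 k')
      then have "currency_level dW dS X \<le> k'"
        using XY X Y dS by (simp add: reach_iff_currency_level_le currency_level_currency_set)
      then show ?thesis
        unfolding V \<open>Y = currency_set dW dS k'\<close>
        using 2 dS X currency_family_subset_Omega[OF X] currency_family_support
        by (intro reach_currency_set_within_marginal_spec) auto
    qed
  qed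
  ultimately show ?thesis unfolding is_independent_def by blast
qed

end

theorem mainTheorem14:
  fixes dW dS :: nat
  assumes "dS \<ge> 1" and "dW \<ge> dS"
  shows "is_currency dW dS (currency_family dW dS) (target_family dW dS) \<and>
         (\<exists>Val. is_value_function dW dS (currency_family dW dS) Val \<and>
                (\<forall>k\<in>{1..dW}. Val (currency_set dW dS k) = log 2 (real dW) - log 2 (real k)) \<and>
                Val (Omega dW dS) = 0) \<and>
         is_independent dW dS (currency_family dW dS) (target_family dW dS)"
proof -
  have dS: "0 < dS" "dS \<le> dW" using assms by auto
  show ?thesis
    using currency_family_is_currency[OF dS] currency_value_is_value_function[OF dS]
      currency_value_currency_set[OF dS] currency_value_Omega[OF dS]
      currency_family_independent[OF dS]
    by blast
qed

end
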